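(* Let $m,n$ be positive integers with at least one of $m,n$ greater than $1$. The pseudograph $\mathcal{K}_{m,n}$ admits a Möbius knight's tour if and only if at least one of $m$ and $n$ is odd.
   Context: Let $\mathcal{P}$ be the graph with vertex set $\mathbb{Z}^2$ in which $(a,b)$ and $(a',b')$ are adjacent iff $\{|a-a'|,|b-b'|\}=\{1,2\}$. For positive integers $m,n$ let $G$ be the group of automorphisms of $\mathcal{P}$ generated by $\tau(a,b)=(a+m,b)$ and $\sigma(a,b)=(m-1-a,\,b+n)$; it acts freely, and the knight's pseudograph of the $m\times n$ Klein bottle board is $\mathcal{K}_{m,n}=\mathcal{P}/G$ (vertices and edges are orbits; multiple edges and loops may occur), with covering map $\phi_K:\mathcal{P}\to\mathcal{K}_{m,n}$. A knight's tour is a closed walk visiting every vertex exactly once apart from the repeated start/end vertex (a Hamiltonian cycle). Regard a tour as a closed walk starting and ending at vertex $(0,0)$; it lifts uniquely to a walk in $\mathcal{P}$ starting at $(0,0)$. The tour is a Möbius tour if this lift ends at $(m-1,n)$ or $(m-1,-n)$ (equivalently, its homotopy class is the image of a generator of the fundamental group of the Möbius strip obtained by identifying only the top and bottom sides of the board with a half-twist). *)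

theory Defs
  imports Main
begin

type_synonym pt = "int \<times> int"

definition knight_adj :: "pt \<Rightarrow> pt \<Rightarrow> bool" where
  "knight_adj p q \<longleftrightarrow> {\<bar>fst p - fst q\<bar>, \<bar>snd p - snd q\<bar>} = {1, 2}"

definition kb_tau :: "int \<Rightarrow> pt \<Rightarrow> pt" where
  "kb_tau m p = (fst p + m, snd p)"
definition kb_tau_inv :: "int \<Rightarrow> pt \<Rightarrow> pt" where
  "kb_tau_inv m p = (fst p - m, snd p)"
definition kb_sigma :: "int \<Rightarrow> int \<Rightarrow> pt \<Rightarrow> pt" where
  "kb_sigma m n p = (m - 1 - fst p, snd p + n)"
definition kb_sigma_inv :: "int \<Rightarrow> int \<Rightarrow> pt \<Rightarrow> pt" where
  "kb_sigma_inv m n p = (m - 1 - fst p, snd p - n)"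

inductive_set kb_group :: "int \<Rightarrow> int \<Rightarrow> (pt \<Rightarrow> pt) set" for m n where
  id: "id \<in> kb_group m n"
| tau: "g \<in> kb_group m n \<Longrightarrow> kb_tau m \<circ> g \<in> kb_group m n"
| tau_inv: "g \<in> kb_group m n \<Longrightarrow> kb_tau_inv m \<circ> g \<in> kb_group m n"
| sigma: "g \<in> kb_group m n \<Longrightarrow> kb_sigma m n \<circ> g \<in> kb_group m n"
| sigma_inv: "g \<in> kb_group m n \<Longrightarrow> kb_sigma_inv m n \<circ> g \<in> kb_group m n"

text \<open>Vertices of K_{m,n}: G-orbits of points; phi_K maps a point to its orbit.\<close>
definition kb_vertex :: "int \<Rightarrow> int \<Rightarrow> pt \<Rightarrow> pt set" where
  "kb_vertex m n p = {g p | g. g \<in> kb_group m n}"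

text \<open>Edges of K_{m,n}: G-orbits of edges {p,q} of P; phi_K maps an edge to its orbit.\<close>
definition kb_edge :: "int \<Rightarrow> int \<Rightarrow> pt \<Rightarrow> pt \<Rightarrow> pt set set" where
  "kb_edge m n p q = {{g p, g q} | g. g \<in> kb_group m n}"

text \<open>A Moebius knight's tour of K_{m,n}, given through its unique lift
  p 0, ..., p N to P starting at (0,0): the projected closed walk
  visits every vertex exactly once (apart from the repeated start/end),
  uses pairwise distinct edges (it is a cycle), and the lift ends at
  (m-1, n) or (m-1, -n).\<close>
definition mobius_knight_tour :: "int \<Rightarrow> int \<Rightarrow> (nat \<Rightarrow> pt) \<Rightarrow> nat \<Rightarrow> bool" where
  "mobius_knight_tour m n p N \<longleftrightarrow>
     0 < N \<and>
     p 0 = (0, 0) \<and>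
     (\<forall>i<N. knight_adj (p i) (p (Suc i))) \<and>
     kb_vertex m n (p N) = kb_vertex m n (p 0) \<and>
     inj_on (\<lambda>i. kb_vertex m n (p i)) {0..<N} \<and>
     (\<forall>q. \<exists>i<N. kb_vertex m n (p i) = kb_vertex m n q) \<and>
     inj_on (\<lambda>i. kb_edge m n (p i) (p (Suc i))) {0..<N} \<and>
     (p N = (m - 1, n) \<or> p N = (m - 1, - n))"

end

theory Submission
  imports Defs
begin

text \<open>Every orbit of \<open>G\<close> meets the rectangle \<open>[0, m) \<times> [0, n)\<close> exactly once, so a Moebius
  tour amounts to a knight path in \<open>\<P>\<close> of \<open>m n\<close> moves from \<open>(0, 0)\<close> to \<open>(m - 1, \<plusminus>n)\<close> whose
  first \<open>m n\<close> points lie in distinct orbits. A knight move changes the parity of \<open>a + b\<close>,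
  so \<open>m - 1 \<plusminus> n \<equiv> m n (mod 2)\<close>, which fails when \<open>m\<close> and \<open>n\<close> are both even. Conversely, such
  paths are obtained from finitely many explicit ones by three extensions: stacking a band of
  four rows on a path that stays in the rows \<open>[0, n)\<close>, appending a \<open>6 \<times> n\<close> block to a path
  that stays in the rectangle, and inserting \<open>2 s\<close> columns into a path that stays in the
  columns \<open>[0, m)\<close>.\<close>

section \<open>Canonical representatives of the vertices\<close>

definition knight_move :: "pt \<Rightarrow> pt \<Rightarrow> bool" where
  "knight_move p q \<longleftrightarrow>
     (\<bar>fst p - fst q\<bar> = 1 \<and> \<bar>snd p - snd q\<bar> = 2) \<or> (\<bar>fst p - fst q\<bar> = 2 \<and> \<bar>snd p - snd q\<bar> = 1)"

lemma knight_adj_iff_knight_move: "knight_adj p q \<longleftrightarrow> knight_move p q"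
  unfolding knight_adj_def knight_move_def by (auto simp: doubleton_eq_iff)

text \<open>The element \<open>\<tau>\<^sup>k \<sigma>\<^sup>j\<close> of \<open>G\<close>; every element of \<open>G\<close> has this form.\<close>
definition kb_elem :: "int \<Rightarrow> int \<Rightarrow> int \<Rightarrow> int \<Rightarrow> pt \<Rightarrow> pt" where
  "kb_elem m n j k p = ((if even j then fst p else m - 1 - fst p) + k * m, snd p + j * n)"

lemma kb_elem_0_0 [simp]: "kb_elem m n 0 0 = id"
  by (auto simp: fun_eq_iff kb_elem_def)

lemma kb_elem_in_kb_group: "kb_elem m n j k \<in> kb_group m n"
proof (induction j arbitrary: k rule: int_induct[where k = 0])
  case base
  show ?case
  proof (induction k rule: int_induct[where k = 0])
    case base
    show ?case unfolding kb_elem_0_0 by (rule kb_group.id)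
  next
    case (step1 k)
    have "kb_elem m n 0 (k + 1) = kb_tau m \<circ> kb_elem m n 0 k"
      by (auto simp: fun_eq_iff kb_elem_def kb_tau_def algebra_simps)
    then show ?case using kb_group.tau[OF step1(2)] by (simp only:)
  next
    case (step2 k)
    have "kb_elem m n 0 (k - 1) = kb_tau_inv m \<circ> kb_elem m n 0 k"
      by (auto simp: fun_eq_iff kb_elem_def kb_tau_inv_def algebra_simps)
    then show ?case using kb_group.tau_inv[OF step2(2)] by (simp only:)
  qed
next
  case (step1 j)
  have "kb_elem m n (j + 1) k = kb_sigma m n \<circ> kb_elem m n j (- k)"
    by (auto simp: fun_eq_iff kb_elem_def kb_sigma_def algebra_simps)
  then show ?case using kb_group.sigma[OF step1(2)] by (simp only:)
next
  case (step2 j)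
  have "kb_elem m n (j - 1) k = kb_sigma_inv m n \<circ> kb_elem m n j (- k)"
    by (auto simp: fun_eq_iff kb_elem_def kb_sigma_inv_def algebra_simps)
  then show ?case using kb_group.sigma_inv[OF step2(2)] by (simp only:)
qed

lemma kb_group_eq: "kb_group m n = {kb_elem m n j k | j k. True}"
proof
  show "kb_group m n \<subseteq> {kb_elem m n j k | j k. True}"
  proof
    fix g assume "g \<in> kb_group m n"
    then show "g \<in> {kb_elem m n j k | j k. True}"
    proof (induction rule: kb_group.induct)
      case id
      have "id = kb_elem m n 0 0" by simp
      then show ?case by blast
    next
      case (tau g)
      then obtain j k where "g = kb_elem m n j k" by blast
      then have "kb_tau m \<circ> g = kb_elem m n j (k + 1)"
        by (auto simp: fun_eq_iff kb_elem_def kb_tau_def algebra_simps)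
      then show ?case by blast
    next
      case (tau_inv g)
      then obtain j k where "g = kb_elem m n j k" by blast
      then have "kb_tau_inv m \<circ> g = kb_elem m n j (k - 1)"
        by (auto simp: fun_eq_iff kb_elem_def kb_tau_inv_def algebra_simps)
      then show ?case by blast
    next
      case (sigma g)
      then obtain j k where "g = kb_elem m n j k" by blast
      then have "kb_sigma m n \<circ> g = kb_elem m n (j + 1) (- k)"
        by (auto simp: fun_eq_iff kb_elem_def kb_sigma_def algebra_simps)
      then show ?case by blast
    next
      case (sigma_inv g)
      then obtain j k where "g = kb_elem m n j k" by blast
      then have "kb_sigma_inv m n \<circ> g = kb_elem m n (j - 1) (- k)"
        by (auto simp: fun_eq_iff kb_elem_def kb_sigma_inv_def algebra_simps)
      then show ?case by blast
    qed
  qed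
  show "{kb_elem m n j k | j k. True} \<subseteq> kb_group m n"
    using kb_elem_in_kb_group by blast
qed

lemma kb_elem_fixpoint:
  assumes "0 < m" "0 < n" "kb_elem m n j k q = q"
  shows "kb_elem m n j k = id"
proof -
  have "j = 0" using assms by (simp add: kb_elem_def prod_eq_iff)
  moreover have "k = 0" using assms by (simp add: kb_elem_def prod_eq_iff \<open>j = 0\<close>)
  ultimately show ?thesis by simp
qed

text \<open>The representative of the orbit of \<open>p\<close> in the fundamental rectangle
  \<open>[0, m) \<times> [0, n)\<close>: undo the row shift and, for an odd number of shifts, the reflection.\<close>
definition kb_canon :: "int \<Rightarrow> int \<Rightarrow> pt \<Rightarrow> pt" where
  "kb_canon m n p = ((if even (snd p div n) then fst p else m - 1 - fst p) mod m, snd p mod n)"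

lemma kb_canon_kb_elem:
  assumes "0 < n"
  shows "kb_canon m n (kb_elem m n j k p) = kb_canon m n p"
proof -
  have div: "(snd p + j * n) div n = snd p div n + j" using assms by simp
  have "m - 1 - (x + k * m) = (m - 1 - x) + (- k) * m"
    and "m - 1 - (m - 1 - x + k * m) = x + (- k) * m" for x
    by (simp_all add: algebra_simps)
  then have "(m - 1 - (x + k * m)) mod m = (m - 1 - x) mod m"
    and "(m - 1 - (m - 1 - x + k * m)) mod m = x mod m" for x
    by (metis mod_mult_self1)+
  then show ?thesis using div by (auto simp: kb_canon_def kb_elem_def)
qed

lemma kb_canon_eqE:
  assumes m: "0 < m" and n: "0 < n" and eq: "kb_canon m n q = kb_canon m n p"
  obtains j k where "q = kb_elem m n j k p"
proof -
  define j where "j = snd q div n - snd p div n"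
  define p' where "p' = kb_elem m n j 0 p"
  have eq': "kb_canon m n q = kb_canon m n p'"
    using eq kb_canon_kb_elem[OF n] by (simp add: p'_def)
  have div: "snd p' div n = snd q div n"
    using n by (simp add: p'_def kb_elem_def j_def)
  have "snd p' mod n = snd q mod n"
    using eq' by (simp add: kb_canon_def)
  with div have snd_eq: "snd p' = snd q"
    by (metis div_mult_mod_eq)
  have "m dvd fst q - fst p'"
  proof (cases "even (snd q div n)")
    case True
    then show ?thesis using eq' div by (simp add: kb_canon_def mod_eq_dvd_iff)
  next
    case False
    then show ?thesis
      using eq' div by (simp add: kb_canon_def mod_eq_dvd_iff dvd_diff_commute)
  qed
  then obtain k where "fst q - fst p' = m * k" by (rule dvdE)
  then have "fst q = fst p' + k * m" by (simp add: algebra_simps)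
  then have "q = kb_elem m n j k p"
    using snd_eq by (simp add: p'_def kb_elem_def prod_eq_iff)
  then show ?thesis by (rule that)
qed

lemma kb_vertex_eq_iff:
  assumes "0 < m" "0 < n"
  shows "kb_vertex m n p = kb_vertex m n q \<longleftrightarrow> kb_canon m n p = kb_canon m n q"
proof -
  have "kb_vertex m n p = {r. kb_canon m n r = kb_canon m n p}" for p
  proof (intro set_eqI iffI)
    fix r assume "r \<in> kb_vertex m n p"
    then obtain j k where "r = kb_elem m n j k p"
      by (auto simp: kb_vertex_def kb_group_eq)
    then show "r \<in> {r. kb_canon m n r = kb_canon m n p}"
      using kb_canon_kb_elem[OF assms(2)] by simp
  next
    fix r assume "r \<in> {r. kb_canon m n r = kb_canon m n p}"
    then obtain j k where "r = kb_elem m n j k p"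
      using kb_canon_eqE[OF assms] by blast
    then show "r \<in> kb_vertex m n p"
      by (auto simp: kb_vertex_def kb_group_eq)
  qed
  then show ?thesis by auto
qed

definition board :: "int \<Rightarrow> int \<Rightarrow> pt set" where
  "board m n = {0..<m} \<times> {0..<n}"

lemma kb_canon_in_board: "0 < m \<Longrightarrow> 0 < n \<Longrightarrow> kb_canon m n p \<in> board m n"
  by (simp add: kb_canon_def board_def)

lemma kb_canon_rows: "0 \<le> snd p \<Longrightarrow> snd p < n \<Longrightarrow> kb_canon m n p = (fst p mod m, snd p)"
  by (simp add: kb_canon_def)

lemma kb_canon_board: "p \<in> board m n \<Longrightarrow> kb_canon m n p = p"
  by (auto simp: kb_canon_def board_def)

section \<open>Moebius paths\<close>

lemma inj_on_cyclic_swap: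
  fixes c :: "nat \<Rightarrow> 'a"
  assumes inj: "inj_on c {..<N}" and closed: "c N = c 0"
    and ij: "i < N" "j < N" "i \<noteq> j"
    and swap: "c j = c (Suc i)" "c (Suc j) = c i"
  shows "N = 2"
proof -
  have eq: "s = t" if "s < N" "t < N" "c s = c t" for s t
    using inj that by (auto dest: inj_onD)
  show ?thesis
  proof (cases "Suc i = N")
    case True
    then have "j = 0" using eq[of j 0] swap(1) closed ij by simp
    then show ?thesis using eq[of 1 i] swap(2) ij True by fastforce
  next
    case False
    then have "j = Suc i" using eq[of j "Suc i"] swap(1) ij by simp
    then have "Suc j = N" using eq[of "Suc j" i] swap(2) ij by fastforce
    then have "i = 0" using eq[of 0 i] swap(2) closed ij by simp
    then show ?thesis using \<open>j = Suc i\<close> \<open>Suc j = N\<close> by simp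
  qed
qed

lemma kb_edge_eqE:
  assumes "kb_edge m n a b = kb_edge m n c d"
  obtains j k where "{c, d} = {kb_elem m n j k a, kb_elem m n j k b}"
proof -
  have "{c, d} = {id c, id d}" by simp
  then have "{c, d} \<in> kb_edge m n c d"
    unfolding kb_edge_def using kb_group.id by blast
  then have "{c, d} \<in> kb_edge m n a b" using assms by simp
  then obtain g where "g \<in> kb_group m n" "{c, d} = {g a, g b}"
    unfolding kb_edge_def by blast
  moreover obtain j k where "g = kb_elem m n j k"
    using \<open>g \<in> kb_group m n\<close> unfolding kb_group_eq by blast
  ultimately show ?thesis using that by blast
qed

text \<open>Two steps of a closed lift that project to the same edge of \<open>\<K>\<^sub>m\<^sub>,\<^sub>n\<close> are
  either equal or traverse it in opposite directions; the latter forces a cycle of length 2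
  whose middle vertex is fixed by the identifying group element, which is then the identity.\<close>
lemma inj_on_kb_edge_lift:
  assumes m: "0 < m" and n: "0 < n"
    and inj: "inj_on (kb_canon m n \<circ> p) {..<N}"
    and closed: "kb_canon m n (p N) = kb_canon m n (p 0)" and open_lift: "p N \<noteq> p 0"
  shows "inj_on (\<lambda>i. kb_edge m n (p i) (p (Suc i))) {0..<N}"
proof (rule inj_onI, rule ccontr)
  let ?c = "kb_canon m n \<circ> p"
  fix i j
  assume i: "i \<in> {0..<N}" and j: "j \<in> {0..<N}" and ij: "i \<noteq> j"
    and edge_eq: "kb_edge m n (p i) (p (Suc i)) = kb_edge m n (p j) (p (Suc j))"
  from edge_eq obtain a b where g: "{p j, p (Suc j)} = {kb_elem m n a b (p i), kb_elem m n a b (p (Suc i))}"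
    by (rule kb_edge_eqE)
  let ?g = "kb_elem m n a b"
  have eq: "s = t" if "s < N" "t < N" "?c s = ?c t" for s t
    using inj that unfolding inj_on_def by simp
  consider "p j = ?g (p i)" "p (Suc j) = ?g (p (Suc i))"
    | "p j = ?g (p (Suc i))" "p (Suc j) = ?g (p i)"
    using g by (auto simp: doubleton_eq_iff)
  then show False
  proof cases
    case 1
    then have "?c j = ?c i" by (simp add: kb_canon_kb_elem[OF n])
    then show False using eq i j ij by simp
  next
    case 2
    then have "?c j = ?c (Suc i)" "?c (Suc j) = ?c i" by (simp_all add: kb_canon_kb_elem[OF n])
    then have "N = 2"
      using inj_on_cyclic_swap[OF inj _ _ _ ij] closed i j by simp
    then have ij01: "(i = 0 \<and> j = 1) \<or> (i = 1 \<and> j = 0)" using i j ij by auto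
    then have "?g (p 1) = p 1" using 2 by auto
    then have "?g = id" by (rule kb_elem_fixpoint[OF m n])
    then have "p j = p (Suc i)" "p (Suc j) = p i" using 2 by simp_all
    then show False using ij01 open_lift \<open>N = 2\<close> by (auto simp: numeral_2_eq_2)
  qed
qed

definition kb_path :: "int \<Rightarrow> int \<Rightarrow> pt list \<Rightarrow> bool" where
  "kb_path m n ps \<longleftrightarrow> length ps = nat (m * n) \<and> hd ps = (0, 0) \<and>
     successively knight_move ps \<and> distinct (map (kb_canon m n) ps)"

text \<open>A Moebius tour, given by its lift to \<open>\<P>\<close> without the final point.\<close>
definition mobius_path :: "int \<Rightarrow> int \<Rightarrow> pt list \<Rightarrow> bool" where
  "mobius_path m n ps \<longleftrightarrow>
     kb_path m n ps \<and> (\<exists>e \<in> {(m - 1, n), (m - 1, - n)}. knight_move (last ps) e)"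

lemma kb_canon_mobius_end:
  "0 < n \<Longrightarrow> e \<in> {(m - 1, n), (m - 1, - n)} \<Longrightarrow> kb_canon m n e = (0, 0)"
  by (auto simp: kb_canon_def zdiv_zminus1_eq_if)

lemma card_board: "0 < m \<Longrightarrow> 0 < n \<Longrightarrow> card (board m n) = nat (m * n)"
  by (simp add: board_def card_cartesian_product nat_mult_distrib)

lemma kb_canon_image_eq_board_iff:
  assumes m: "0 < m" and n: "0 < n" and inj: "inj_on (kb_canon m n \<circ> p) {..<N}"
  shows "(kb_canon m n \<circ> p) ` {..<N} = board m n \<longleftrightarrow> N = nat (m * n)"
proof
  assume "(kb_canon m n \<circ> p) ` {..<N} = board m n"
  then show "N = nat (m * n)" using card_image[OF inj] card_board[OF m n] by simp
next
  assume N: "N = nat (m * n)"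
  show "(kb_canon m n \<circ> p) ` {..<N} = board m n"
  proof (rule card_subset_eq)
    show "finite (board m n)" by (simp add: board_def)
    show "(kb_canon m n \<circ> p) ` {..<N} \<subseteq> board m n" by (auto intro: kb_canon_in_board[OF m n])
    show "card ((kb_canon m n \<circ> p) ` {..<N}) = card (board m n)"
      using card_image[OF inj] card_board[OF m n] N by simp
  qed
qed

lemma mobius_path_lift:
  assumes m: "0 < m" and n: "0 < n" and path: "mobius_path m n ps"
  obtains e where "e \<in> {(m - 1, n), (m - 1, - n)}"
    and "length ps = nat (m * n)" and "(ps @ [e]) ! 0 = (0, 0)" and "(ps @ [e]) ! length ps = e"
    and "\<forall>i < length ps. knight_adj ((ps @ [e]) ! i) ((ps @ [e]) ! Suc i)"
    and "inj_on (kb_canon m n \<circ> (!) (ps @ [e])) {..<length ps}"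
proof -
  obtain e where e: "e \<in> {(m - 1, n), (m - 1, - n)}" and last_e: "knight_move (last ps) e"
    using path by (auto simp: mobius_path_def)
  have len: "length ps = nat (m * n)" and hd: "hd ps = (0, 0)"
    and moves: "successively knight_move ps" and dist: "distinct (map (kb_canon m n) ps)"
    using path by (auto simp: mobius_path_def kb_path_def)
  have ne: "ps \<noteq> []" using len m n by (auto simp: mult_le_0_iff)
  let ?p = "(!) (ps @ [e])"
  have p_nth: "?p i = ps ! i" if "i < length ps" for i
    using that by (simp add: nth_append)
  have adj: "\<forall>i < length ps. knight_adj (?p i) (?p (Suc i))"
  proof (intro allI impI)
    fix i assume i: "i < length ps"
    then consider "Suc i < length ps" | "i = length ps - 1" by linarith
    then show "knight_adj (?p i) (?p (Suc i))"
    proof cases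
      case 1
      then show ?thesis using successively_nth[OF moves] by (simp add: p_nth knight_adj_iff_knight_move)
    next
      case 2
      then show ?thesis using last_e ne i by (simp add: p_nth last_conv_nth knight_adj_iff_knight_move)
    qed
  qed
  have inj: "inj_on (kb_canon m n \<circ> ?p) {..<length ps}"
    using dist by (auto simp: inj_on_def distinct_conv_nth p_nth)
  have p0: "?p 0 = (0, 0)" using hd ne by (simp add: p_nth hd_conv_nth)
  have pN: "?p (length ps) = e" by simp
  show ?thesis by (rule that[OF e len p0 pN adj inj])
qed

lemma mobius_path_imp_tour:
  assumes m: "0 < m" and n: "0 < n" and path: "mobius_path m n ps"
  shows "\<exists>p N. mobius_knight_tour m n p N"
proof -
  define N where "N = length ps"
  obtain e where e: "e \<in> {(m - 1, n), (m - 1, - n)}" and N: "N = nat (m * n)"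
    and p0: "(ps @ [e]) ! 0 = (0, 0)" and pN: "(ps @ [e]) ! N = e"
    and adj: "\<forall>i<N. knight_adj ((ps @ [e]) ! i) ((ps @ [e]) ! Suc i)"
    and inj: "inj_on (kb_canon m n \<circ> (!) (ps @ [e])) {..<N}"
    using mobius_path_lift[OF m n path] unfolding N_def by blast
  define p where "p = (!) (ps @ [e])"
  have closed: "kb_canon m n (p N) = kb_canon m n (p 0)"
    using kb_canon_mobius_end[OF n e] pN p0 by (simp add: p_def kb_canon_def)
  have "p N \<noteq> p 0" using e pN p0 n by (auto simp: p_def)
  then have edges: "inj_on (\<lambda>i. kb_edge m n (p i) (p (Suc i))) {0..<N}"
    using inj_on_kb_edge_lift[OF m n inj[folded p_def] closed] by simp
  have vertices: "inj_on (\<lambda>i. kb_vertex m n (p i)) {0..<N}"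
    using inj by (simp add: p_def inj_on_def kb_vertex_eq_iff[OF m n] atLeast0LessThan)
  have img: "(kb_canon m n \<circ> p) ` {..<N} = board m n"
    using kb_canon_image_eq_board_iff[OF m n inj[folded p_def]] N by simp
  have "\<forall>q. \<exists>i<N. kb_vertex m n (p i) = kb_vertex m n q"
  proof (intro allI)
    fix q
    have "kb_canon m n q \<in> (kb_canon m n \<circ> p) ` {..<N}"
      using img kb_canon_in_board[OF m n] by simp
    then show "\<exists>i<N. kb_vertex m n (p i) = kb_vertex m n q"
      by (auto simp: kb_vertex_eq_iff[OF m n])
  qed
  moreover have "kb_vertex m n (p N) = kb_vertex m n (p 0)"
    using closed by (simp add: kb_vertex_eq_iff[OF m n])
  moreover have "p N = (m - 1, n) \<or> p N = (m - 1, - n)" using e pN by (auto simp: p_def)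
  moreover have "0 < N" using N m n by simp
  ultimately have "mobius_knight_tour m n p N"
    unfolding mobius_knight_tour_def using p0 adj vertices edges by (simp add: p_def)
  then show ?thesis by blast
qed

section \<open>The parity obstruction\<close>

lemma knight_move_parity: "knight_move p q \<Longrightarrow> odd (fst p + snd p + fst q + snd q)"
  unfolding knight_move_def by (auto simp: abs_if) presburger+

lemma knight_walk_parity:
  assumes "p 0 = (0, 0)" and "\<forall>i<N. knight_adj (p i) (p (Suc i))" and "i \<le> N"
  shows "even (fst (p i) + snd (p i) + int i)"
  using assms(3)
proof (induction i)
  case 0
  then show ?case using assms(1) by simp
next
  case (Suc i)
  have IH: "even (fst (p i) + snd (p i) + int i)" using Suc by simp
  have "knight_move (p i) (p (Suc i))"
    using assms(2) Suc.prems by (simp add: knight_adj_iff_knight_move)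
  then have "odd (fst (p i) + snd (p i) + fst (p (Suc i)) + snd (p (Suc i)))"
    by (rule knight_move_parity)
  then show ?case using IH by presburger
qed

lemma mobius_tour_length:
  assumes m: "0 < m" and n: "0 < n" and tour: "mobius_knight_tour m n p N"
  shows "N = nat (m * n)"
proof -
  have inj: "inj_on (kb_canon m n \<circ> p) {..<N}"
    using tour by (simp add: mobius_knight_tour_def inj_on_def kb_vertex_eq_iff[OF m n] atLeast0LessThan)
  have "board m n \<subseteq> (kb_canon m n \<circ> p) ` {..<N}"
  proof
    fix q assume "q \<in> board m n"
    moreover have "\<exists>i<N. kb_vertex m n (p i) = kb_vertex m n q"
      using tour unfolding mobius_knight_tour_def by blast
    ultimately show "q \<in> (kb_canon m n \<circ> p) ` {..<N}"
      by (force simp: kb_vertex_eq_iff[OF m n] kb_canon_board)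
  qed
  moreover have "(kb_canon m n \<circ> p) ` {..<N} \<subseteq> board m n"
    by (auto intro: kb_canon_in_board[OF m n])
  ultimately show ?thesis
    using kb_canon_image_eq_board_iff[OF m n inj] by blast
qed

lemma mobius_tour_imp_odd:
  assumes m: "0 < m" and n: "0 < n" and tour: "mobius_knight_tour m n p N"
  shows "odd m \<or> odd n"
proof (rule ccontr)
  assume "\<not> (odd m \<or> odd n)"
  then have even: "even m" "even n" by auto
  have "N = nat (m * n)" by (rule mobius_tour_length[OF m n tour])
  then have "even (int N)" using even m n by simp
  moreover have "even (fst (p N) + snd (p N) + int N)"
    using knight_walk_parity[of p N N] tour by (simp add: mobius_knight_tour_def)
  moreover have "p N = (m - 1, n) \<or> p N = (m - 1, - n)"
    using tour by (simp add: mobius_knight_tour_def)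
  ultimately show False using even by auto
qed

section \<open>Extending Moebius paths\<close>

text \<open>Three shapes of Moebius paths that can be enlarged: row paths stay in the rows \<open>[0, n)\<close>
  and grow by four rows, board paths stay in the rectangle and grow by six columns, and column
  paths stay in the columns \<open>[0, m)\<close> and grow by inserting columns.\<close>

definition row_path :: "int \<Rightarrow> int \<Rightarrow> pt list \<Rightarrow> bool" where
  "row_path m n ps \<longleftrightarrow>
     kb_path m n ps \<and> (\<forall>c \<in> set ps. 0 \<le> snd c \<and> snd c < n) \<and> knight_move (last ps) (m - 1, n)"

definition column_path :: "int \<Rightarrow> int \<Rightarrow> pt list \<Rightarrow> bool" where
  "column_path m n ps \<longleftrightarrow>
     kb_path m n ps \<and> (\<forall>c \<in> set ps. 0 \<le> fst c \<and> fst c < m) \<and> last ps = (m - 2, n - 2)"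

definition board_path :: "int \<Rightarrow> int \<Rightarrow> pt list \<Rightarrow> bool" where
  "board_path m n ps \<longleftrightarrow> kb_path m n ps \<and> (\<forall>c \<in> set ps. c \<in> board m n) \<and> last ps = (m - 2, n - 2)"

lemma knight_move_to_corner: "knight_move (m - 2, n - 2) (m - 1, n)"
  by (simp add: knight_move_def)

lemma row_path_imp_mobius_path: "row_path m n ps \<Longrightarrow> mobius_path m n ps"
  by (auto simp: row_path_def mobius_path_def)

lemma column_path_imp_mobius_path: "column_path m n ps \<Longrightarrow> mobius_path m n ps"
  using knight_move_to_corner by (auto simp: column_path_def mobius_path_def)

lemma board_path_imp_row_path: "board_path m n ps \<Longrightarrow> row_path m n ps"
  using knight_move_to_corner by (auto simp: board_path_def row_path_def board_def)

lemma kb_path_nonempty: "0 < m \<Longrightarrow> 0 < n \<Longrightarrow> kb_path m n ps \<Longrightarrow> ps \<noteq> []"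
  by (auto simp: kb_path_def mult_le_0_iff)

definition hshift :: "int \<Rightarrow> pt \<Rightarrow> pt" where
  "hshift a c = (fst c + a, snd c)"

lemma hshift_simps [simp]: "fst (hshift a c) = fst c + a" "snd (hshift a c) = snd c"
  by (simp_all add: hshift_def)

lemma knight_move_hshift [simp]: "knight_move (hshift a p) (hshift a q) \<longleftrightarrow> knight_move p q"
  by (simp add: knight_move_def)

lemma distinct_map_hshift [simp]: "distinct (map (hshift a) xs) \<longleftrightarrow> distinct xs"
  by (simp add: distinct_map inj_on_def hshift_def prod_eq_iff)

lemma successively_knight_move_hshift [simp]:
  "successively knight_move (map (hshift a) ps) \<longleftrightarrow> successively knight_move ps"
  by (simp add: successively_map)

text \<open>A Hamiltonian path of the rows \<open>[n, n + 4)\<close> of the cylinder \<open>\<int>/m \<times> \<int>\<close>.\<close>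
definition row_band :: "int \<Rightarrow> int \<Rightarrow> pt list \<Rightarrow> bool" where
  "row_band m n B \<longleftrightarrow>
     length B = nat (4 * m) \<and> hd B = (m - 1, n) \<and> successively knight_move B \<and>
     (\<forall>c \<in> set B. n \<le> snd c \<and> snd c < n + 4) \<and> distinct (map (\<lambda>c. (fst c mod m, snd c)) B) \<and>
     knight_move (last B) (m - 1, n + 4)"

lemma row_path_append_band:
  assumes m: "0 < m" and n: "0 < n" and path: "row_path m n ps" and band: "row_band m n B"
  shows "row_path m (n + 4) (ps @ B)"
proof -
  let ?key = "\<lambda>c. (fst c mod m, snd c)"
  have len: "length ps = nat (m * n)" and hd: "hd ps = (0, 0)"
    and moves: "successively knight_move ps" and dist: "distinct (map (kb_canon m n) ps)"
    and rows: "\<forall>c \<in> set ps. 0 \<le> snd c \<and> snd c < n" and last: "knight_move (last ps) (m - 1, n)"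
    using path by (auto simp: row_path_def kb_path_def)
  have lenB: "length B = nat (4 * m)" and hdB: "hd B = (m - 1, n)"
    and movesB: "successively knight_move B" and distB: "distinct (map ?key B)"
    and rowsB: "\<forall>c \<in> set B. n \<le> snd c \<and> snd c < n + 4"
    and lastB: "knight_move (last B) (m - 1, n + 4)"
    using band by (auto simp: row_band_def)
  have ne: "ps \<noteq> []" "B \<noteq> []"
    using kb_path_nonempty[OF m n] path lenB m by (auto simp: row_path_def)
  have canon: "map (kb_canon m n) ps = map ?key ps" "map (kb_canon m (n + 4)) ps = map ?key ps"
    "map (kb_canon m (n + 4)) B = map ?key B"
    using rows rowsB n by (auto simp: kb_canon_rows)
  have "length (ps @ B) = nat (m * (n + 4))"
    using len lenB m n by (simp add: distrib_left nat_add_distrib)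
  moreover have "successively knight_move (ps @ B)"
    using moves movesB last hdB by (simp add: successively_append_iff)
  moreover have "distinct (map (kb_canon m (n + 4)) (ps @ B))"
  proof -
    have "set (map ?key ps) \<inter> set (map ?key B) = {}" using rows rowsB by fastforce
    then show ?thesis using dist distB by (simp add: canon)
  qed
  moreover have "\<forall>c \<in> set (ps @ B). 0 \<le> snd c \<and> snd c < n + 4"
    using rows rowsB n by fastforce
  ultimately show ?thesis
    using hd ne lastB by (simp add: row_path_def kb_path_def)
qed

lemma successively_map_upto:
  assumes "\<And>t. a \<le> t \<Longrightarrow> t < b \<Longrightarrow> P (f t) (f (t + 1))"
  shows "successively P (map f [a..b])"
  unfolding successively_conv_nth
proof (intro allI impI)
  fix i assume "Suc i < length (map f [a..b])"
  then have "a + int i < b" by simp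
  then show "P (map f [a..b] ! i) (map f [a..b] ! Suc i)"
    using assms[of "a + int i"] by (simp add: ac_simps)
qed

lemma hd_map_upto: "a \<le> b \<Longrightarrow> hd (map f [a..b]) = f a"
  by (simp add: upto_rec1)

lemma last_map_upto: "a \<le> b \<Longrightarrow> last (map f [a..b]) = f b"
  by (simp add: upto_rec2)

lemma eq_if_dvd_diff_bounded:
  fixes s t m :: int
  assumes "m dvd s - t" "0 \<le> s" "s < m" "0 \<le> t" "t < m"
  shows "s = t"
  using assms by (metis mod_eq_dvd_iff mod_pos_pos_trivial)

lemma eq_if_odd_dvd_double_diff:
  fixes s t m :: int
  assumes "odd m" "m dvd 2 * (s - t)" "s mod 2 = t mod 2"
    and "0 \<le> s" "s < 2 * m" "0 \<le> t" "t < 2 * m"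
  shows "s = t"
proof -
  have "coprime m 2" using assms(1) by simp
  then have "m dvd s - t" using assms(2) coprime_dvd_mult_right_iff by blast
  moreover have "2 dvd s - t" using assms(3) by (simp add: mod_eq_dvd_iff)
  ultimately have "m * 2 dvd s - t" using \<open>coprime m 2\<close> by (rule divides_mult)
  then show ?thesis using assms(4-) eq_if_dvd_diff_bounded[of "2 * m" s t] by (simp add: mult.commute)
qed

lemma abs_mod_2_succ: "\<bar>(t + 1) mod 2 - t mod 2\<bar> = (1::int)" "\<bar>t mod 2 - (t + 1) mod 2\<bar> = (1::int)"
  by presburger+

text \<open>For odd \<open>m\<close>: out along the rows \<open>n, n + 1\<close> with steps \<open>(2, \<plusminus>1)\<close>, back along
  \<open>n + 3, n + 2\<close>; \<open>2 m\<close> such steps cover a row pair since \<open>2\<close> is invertible mod \<open>m\<close>.\<close>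
definition odd_band :: "int \<Rightarrow> int \<Rightarrow> pt list" where
  "odd_band m n =
     map (\<lambda>t. (m - 1 + 2 * t, n + t mod 2)) [0..2 * m - 1] @
     map (\<lambda>t. (5 * m - 4 - 2 * t, n + 3 - t mod 2)) [0..2 * m - 1]"

lemma odd_band_moves:
  assumes m: "0 < m"
  shows "successively knight_move (odd_band m n)"
proof -
  define f where "f t = (m - 1 + 2 * t, n + t mod 2)" for t
  define g where "g t = (5 * m - 4 - 2 * t, n + 3 - t mod 2)" for t
  have "successively knight_move (map f [0..2 * m - 1])"
    by (rule successively_map_upto) (simp add: f_def knight_move_def abs_mod_2_succ)
  moreover have "successively knight_move (map g [0..2 * m - 1])"
    by (rule successively_map_upto) (simp add: g_def knight_move_def abs_mod_2_succ)
  moreover have "(2 * m - 1) mod 2 = 1" by presburger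
  then have "knight_move (f (2 * m - 1)) (g 0)"
    by (simp add: f_def g_def knight_move_def)
  ultimately show ?thesis
    using m by (simp add: odd_band_def f_def[abs_def] g_def[abs_def] successively_append_iff hd_map_upto last_map_upto)
qed

lemma odd_band_distinct:
  assumes odd: "odd m"
  shows "distinct (map (\<lambda>c. (fst c mod m, snd c)) (odd_band m n))"
proof -
  define f where "f t = (m - 1 + 2 * t, n + t mod 2)" for t
  define g where "g t = (5 * m - 4 - 2 * t, n + 3 - t mod 2)" for t
  let ?key = "\<lambda>c. (fst c mod m, snd c)" and ?T = "{0..2 * m - 1}"
  have band: "odd_band m n = map f [0..2 * m - 1] @ map g [0..2 * m - 1]"
    by (simp add: odd_band_def f_def[abs_def] g_def[abs_def])
  have "inj_on (?key \<circ> f) ?T"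
  proof (rule inj_onI)
    fix s t assume s: "s \<in> ?T" and t: "t \<in> ?T" and "(?key \<circ> f) s = (?key \<circ> f) t"
    then have "m dvd 2 * (s - t)" "s mod 2 = t mod 2"
      by (simp_all add: f_def mod_eq_dvd_iff right_diff_distrib)
    then show "s = t" using odd s t by (auto intro!: eq_if_odd_dvd_double_diff[of m s t])
  qed
  moreover have "inj_on (?key \<circ> g) ?T"
  proof (rule inj_onI)
    fix s t assume s: "s \<in> ?T" and t: "t \<in> ?T" and "(?key \<circ> g) s = (?key \<circ> g) t"
    then have "m dvd 2 * (t - s)" "t mod 2 = s mod 2"
      by (simp_all add: g_def mod_eq_dvd_iff right_diff_distrib)
    then show "s = t" using odd s t eq_if_odd_dvd_double_diff[of m t s] by auto
  qed
  moreover have "snd (f s) \<noteq> snd (g t)" for s t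
    by (simp add: f_def g_def)
  then have "(?key \<circ> f) ` ?T \<inter> (?key \<circ> g) ` ?T = {}" by auto
  ultimately show ?thesis by (simp add: band distinct_map)
qed

lemma odd_band_rows:
  assumes "c \<in> set (odd_band m n)"
  shows "n \<le> snd c \<and> snd c < n + 4"
proof -
  obtain t where "c = (m - 1 + 2 * t, n + t mod 2) \<or> c = (5 * m - 4 - 2 * t, n + 3 - t mod 2)"
    using assms by (auto simp: odd_band_def)
  moreover have "0 \<le> t mod 2" "t mod 2 < 2" by simp_all
  ultimately show ?thesis by (elim disjE) (simp only: prod.sel, linarith)+
qed

lemma row_band_odd_band:
  assumes m: "0 < m" and odd: "odd m"
  shows "row_band m n (odd_band m n)"
proof -
  have "(2 * m - 1) mod 2 = 1" by presburger
  then have "last (odd_band m n) = (m - 2, n + 2)"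
    using m by (simp add: odd_band_def last_map_upto)
  moreover have "hd (odd_band m n) = (m - 1, n)"
    using m by (simp add: odd_band_def hd_map_upto)
  moreover have "length (odd_band m n) = nat (4 * m)"
    using m by (simp add: odd_band_def nat_add_distrib[symmetric])
  ultimately show ?thesis
    using odd_band_moves[OF m] odd_band_distinct[OF odd] odd_band_rows
    by (simp add: row_band_def knight_move_def)
qed

text \<open>For even \<open>m\<close>: four passes of \<open>m\<close> moves \<open>(\<plusminus>1, \<plusminus>2)\<close>, each covering half of the row pair
  \<open>{n, n + 2}\<close> or \<open>{n + 1, n + 3}\<close>; the two passes through a row pair visit columns of
  opposite parity, and parity survives reduction modulo the even \<open>m\<close>.\<close>
definition even_band :: "int \<Rightarrow> int \<Rightarrow> pt list" where
  "even_band m n =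
     map (\<lambda>t. (m - 1 + t, n + 2 * (t mod 2))) [0..m - 1] @
     map (\<lambda>t. (2 * m - t, n + 3 - 2 * (t mod 2))) [0..m - 1] @
     map (\<lambda>t. (m - 1 + t, n + 2 - 2 * (t mod 2))) [0..m - 1] @
     map (\<lambda>t. (2 * m - 4 - t, n + 1 + 2 * (t mod 2))) [0..m - 1]"

lemma even_band_moves:
  assumes m: "0 < m" and even: "even m"
  shows "successively knight_move (even_band m n)"
proof -
  define f0 where "f0 t = (m - 1 + t, n + 2 * (t mod 2))" for t
  define f1 where "f1 t = (2 * m - t, n + 3 - 2 * (t mod 2))" for t
  define f2 where "f2 t = (m - 1 + t, n + 2 - 2 * (t mod 2))" for t
  define f3 where "f3 t = (2 * m - 4 - t, n + 1 + 2 * (t mod 2))" for t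
  have band: "even_band m n = map f0 [0..m - 1] @ map f1 [0..m - 1] @ map f2 [0..m - 1] @ map f3 [0..m - 1]"
    by (simp add: even_band_def f0_def[abs_def] f1_def[abs_def] f2_def[abs_def] f3_def[abs_def])
  have "successively knight_move (map f0 [0..m - 1])"
    by (rule successively_map_upto) (simp add: f0_def knight_move_def; presburger)
  moreover have "successively knight_move (map f1 [0..m - 1])"
    by (rule successively_map_upto) (simp add: f1_def knight_move_def; presburger)
  moreover have "successively knight_move (map f2 [0..m - 1])"
    by (rule successively_map_upto) (simp add: f2_def knight_move_def; presburger)
  moreover have "successively knight_move (map f3 [0..m - 1])"
    by (rule successively_map_upto) (simp add: f3_def knight_move_def; presburger)
  moreover have "(m - 1) mod 2 = 1" using even by presburger
  then have "knight_move (f0 (m - 1)) (f1 0)" "knight_move (f1 (m - 1)) (f2 0)"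
    "knight_move (f2 (m - 1)) (f3 0)"
    by (simp_all add: f0_def f1_def f2_def f3_def knight_move_def)
  ultimately show ?thesis
    using m by (simp add: band successively_append_iff hd_map_upto last_map_upto)
qed

lemma image_disjointI: "(\<And>s t. s \<in> A \<Longrightarrow> t \<in> B \<Longrightarrow> f s \<noteq> g t) \<Longrightarrow> f ` A \<inter> g ` B = {}"
  by auto

lemma inj_on_mod_key:
  fixes f :: "int \<Rightarrow> pt"
  assumes "\<And>s t. fst (f s) mod m = fst (f t) mod m \<Longrightarrow> m dvd s - t \<or> m dvd t - s"
  shows "inj_on ((\<lambda>c. (fst c mod m, snd c)) \<circ> f) {0..m - 1}"
proof (rule inj_onI)
  fix s t assume "s \<in> {0..m - 1}" "t \<in> {0..m - 1}"
    and "((\<lambda>c. (fst c mod m, snd c)) \<circ> f) s = ((\<lambda>c. (fst c mod m, snd c)) \<circ> f) t"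
  then show "s = t"
    using assms eq_if_dvd_diff_bounded[of m s t] eq_if_dvd_diff_bounded[of m t s] by auto
qed

lemma mod_key_images_disjoint:
  fixes f g :: "int \<Rightarrow> pt"
  assumes "\<And>s t. snd (f s) \<noteq> snd (g t)"
  shows "((\<lambda>c. (fst c mod m, snd c)) \<circ> f) ` A \<inter> ((\<lambda>c. (fst c mod m, snd c)) \<circ> g) ` B = {}"
  using assms by (intro image_disjointI) (simp add: prod_eq_iff)

lemma even_band_distinct:
  assumes m: "0 < m" and even: "even m"
  shows "distinct (map (\<lambda>c. (fst c mod m, snd c)) (even_band m n))"
proof -
  define f0 where "f0 t = (m - 1 + t, n + 2 * (t mod 2))" for t
  define f1 where "f1 t = (2 * m - t, n + 3 - 2 * (t mod 2))" for t
  define f2 where "f2 t = (m - 1 + t, n + 2 - 2 * (t mod 2))" for t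
  define f3 where "f3 t = (2 * m - 4 - t, n + 1 + 2 * (t mod 2))" for t
  let ?key = "\<lambda>c. (fst c mod m, snd c)" and ?T = "{0..m - 1}"
  have band: "even_band m n = map f0 [0..m - 1] @ map f1 [0..m - 1] @ map f2 [0..m - 1] @ map f3 [0..m - 1]"
    by (simp add: even_band_def f0_def[abs_def] f1_def[abs_def] f2_def[abs_def] f3_def[abs_def])
  have "inj_on (?key \<circ> f0) ?T" "inj_on (?key \<circ> f1) ?T" "inj_on (?key \<circ> f2) ?T" "inj_on (?key \<circ> f3) ?T"
    by (rule inj_on_mod_key, simp add: f0_def f1_def f2_def f3_def mod_eq_dvd_iff)+
  moreover have "(?key \<circ> f0) ` ?T \<inter> (?key \<circ> f1) ` ?T = {}"
    by (rule mod_key_images_disjoint) (simp add: f0_def f1_def; presburger)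
  moreover have "(?key \<circ> f0) ` ?T \<inter> (?key \<circ> f3) ` ?T = {}"
    by (rule mod_key_images_disjoint) (simp add: f0_def f3_def; presburger)
  moreover have "(?key \<circ> f1) ` ?T \<inter> (?key \<circ> f2) ` ?T = {}"
    by (rule mod_key_images_disjoint) (simp add: f1_def f2_def; presburger)
  moreover have "(?key \<circ> f2) ` ?T \<inter> (?key \<circ> f3) ` ?T = {}"
    by (rule mod_key_images_disjoint) (simp add: f2_def f3_def; presburger)
  moreover have "(?key \<circ> f0) ` ?T \<inter> (?key \<circ> f2) ` ?T = {}"
  proof (rule image_disjointI)
    fix s t
    show "(?key \<circ> f0) s \<noteq> (?key \<circ> f2) t"
    proof
      assume "(?key \<circ> f0) s = (?key \<circ> f2) t"
      then have dvd: "m dvd s - t" and rows: "2 * (s mod 2) = 2 - 2 * (t mod 2)"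
        by (simp_all add: f0_def f2_def mod_eq_dvd_iff)
      have "2 dvd s - t" using even dvd by (rule dvd_trans)
      with rows show False by presburger
    qed
  qed
  moreover have "(?key \<circ> f1) ` ?T \<inter> (?key \<circ> f3) ` ?T = {}"
  proof (rule image_disjointI)
    fix s t
    show "(?key \<circ> f1) s \<noteq> (?key \<circ> f3) t"
    proof
      assume "(?key \<circ> f1) s = (?key \<circ> f3) t"
      then have dvd: "m dvd 4 + t - s" and rows: "3 - 2 * (s mod 2) = 1 + 2 * (t mod 2)"
        by (simp_all add: f1_def f3_def mod_eq_dvd_iff)
      have "2 dvd 4 + t - s" using even dvd by (rule dvd_trans)
      with rows show False by presburger
    qed
  qed
  ultimately show ?thesis
    by (simp add: band distinct_map Int_Un_distrib Int_commute)
qed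

lemma even_band_rows:
  assumes "c \<in> set (even_band m n)"
  shows "n \<le> snd c \<and> snd c < n + 4"
proof -
  obtain t where "c = (m - 1 + t, n + 2 * (t mod 2)) \<or> c = (2 * m - t, n + 3 - 2 * (t mod 2)) \<or>
      c = (m - 1 + t, n + 2 - 2 * (t mod 2)) \<or> c = (2 * m - 4 - t, n + 1 + 2 * (t mod 2))"
    using assms by (auto simp: even_band_def)
  moreover have "0 \<le> t mod 2" "t mod 2 < 2" by simp_all
  ultimately show ?thesis by (elim disjE) (simp only: prod.sel, linarith)+
qed

lemma row_band_even_band:
  assumes m: "0 < m" and even: "even m"
  shows "row_band m n (even_band m n)"
proof -
  have "(m - 1) mod 2 = 1" using even by presburger
  then have "last (even_band m n) = (m - 3, n + 3)"
    using m by (simp add: even_band_def last_map_upto)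
  moreover have "hd (even_band m n) = (m - 1, n)"
    using m by (simp add: even_band_def hd_map_upto)
  moreover have "length (even_band m n) = nat (4 * m)"
    using m by (simp add: even_band_def nat_add_distrib[symmetric])
  ultimately show ?thesis
    using even_band_moves[OF m even] even_band_distinct[OF m even] even_band_rows
    by (simp add: row_band_def knight_move_def)
qed

lemma row_band_exists: "0 < m \<Longrightarrow> \<exists>B. row_band m n B"
  using row_band_odd_band row_band_even_band by blast

definition board_block :: "int \<Rightarrow> pt list \<Rightarrow> bool" where
  "board_block n B \<longleftrightarrow>
     length B = nat (6 * n) \<and> (\<forall>c \<in> set B. c \<in> board 6 n) \<and> distinct B \<and>
     successively knight_move B \<and> knight_move (-2, n - 2) (hd B) \<and> last B = (4, n - 2)"

lemma distinct_map_kb_canon_board: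
  assumes "\<forall>c \<in> set ps. c \<in> board m n"
  shows "distinct (map (kb_canon m n) ps) \<longleftrightarrow> distinct ps"
proof -
  have "map (kb_canon m n) ps = ps" using assms by (simp add: kb_canon_board map_idI)
  then show ?thesis by simp
qed

lemma board_path_append_block:
  assumes m: "0 < m" and n: "0 < n" and path: "board_path m n ps" and block: "board_block n B"
  shows "board_path (m + 6) n (ps @ map (hshift m) B)"
proof -
  have len: "length ps = nat (m * n)" and hd: "hd ps = (0, 0)"
    and moves: "successively knight_move ps" and dist: "distinct (map (kb_canon m n) ps)"
    and inside: "\<forall>c \<in> set ps. c \<in> board m n" and last: "last ps = (m - 2, n - 2)"
    using path by (auto simp: board_path_def kb_path_def)
  have lenB: "length B = nat (6 * n)" and insideB: "\<forall>c \<in> set B. c \<in> board 6 n"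
    and distB: "distinct B" and movesB: "successively knight_move B"
    and hdB: "knight_move (-2, n - 2) (hd B)" and lastB: "last B = (4, n - 2)"
    using block by (auto simp: board_block_def)
  have ne: "ps \<noteq> []" "B \<noteq> []"
    using kb_path_nonempty[OF m n] path lenB n by (auto simp: board_path_def)
  let ?qs = "ps @ map (hshift m) B"
  have inside': "\<forall>c \<in> set ?qs. c \<in> board (m + 6) n"
    using inside insideB m by (auto simp: board_def hshift_def)
  have "distinct ps" using dist distinct_map_kb_canon_board[OF inside] by simp
  moreover have "set ps \<inter> set (map (hshift m) B) = {}"
  proof -
    have False if "c \<in> set ps" "b \<in> set B" "c = hshift m b" for b c
      using bspec[OF inside that(1)] bspec[OF insideB that(2)] that(3)
      by (simp add: board_def mem_Times_iff)
    then show ?thesis by auto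
  qed
  ultimately have "distinct ?qs" using distB by simp
  then have "distinct (map (kb_canon (m + 6) n) ?qs)"
    using distinct_map_kb_canon_board[OF inside'] by simp
  moreover have "successively knight_move ?qs"
  proof -
    have "knight_move (hshift m (-2, n - 2)) (hshift m (hd B))" using hdB by simp
    then have "knight_move (last ps) (hshift m (hd B))" using last by (simp add: hshift_def)
    then show ?thesis using moves movesB ne by (simp add: successively_append_iff hd_map)
  qed
  moreover have "length ?qs = nat ((m + 6) * n)"
    using len lenB m n by (simp add: distrib_right nat_add_distrib)
  moreover have "last ?qs = (m + 6 - 2, n - 2)"
    using lastB ne by (simp add: last_map hshift_def)
  ultimately show ?thesis
    using hd ne inside' by (simp add: board_path_def kb_path_def)
qed

definition insert_columns :: "int \<Rightarrow> int \<Rightarrow> pt \<Rightarrow> pt" where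
  "insert_columns m s c = (if fst c < s then c else hshift m c)"

lemma kb_canon_insert_columns:
  assumes "0 \<le> m" "0 \<le> fst c" "fst c < 2 * s"
  shows "kb_canon (m + 2 * s) n (insert_columns m s c) = insert_columns m s (kb_canon (2 * s) n c)"
  using assms by (cases c) (auto simp: kb_canon_def insert_columns_def hshift_def)

lemma kb_canon_hshift:
  assumes "0 \<le> s" "0 \<le> fst c" "fst c < m"
  shows "kb_canon (m + 2 * s) n (hshift s c) = hshift s (kb_canon m n c)"
  using assms by (cases c) (auto simp: kb_canon_def hshift_def)

lemma inj_on_insert_columns: "0 \<le> m \<Longrightarrow> inj_on (insert_columns m s) (board (2 * s) n)"
  by (auto simp: inj_on_def insert_columns_def hshift_def board_def split: if_splits)

lemma insert_columns_avoids_middle: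
  "0 \<le> m \<Longrightarrow> c \<in> board (2 * s) n \<Longrightarrow>
     fst (insert_columns m s c) < s \<or> m + s \<le> fst (insert_columns m s c)"
  by (auto simp: insert_columns_def board_def)

text \<open>The two ends of a widened column path, both given in the columns \<open>[0, s)\<close>: \<open>A\<close> stays in
  place and \<open>B\<close> is moved to the last \<open>s\<close> columns. As \<open>insert_columns\<close> commutes with the
  canonical representatives, they then visit distinct vertices iff \<open>A\<close> followed by \<open>B\<close> moved
  by \<open>s\<close> visits distinct vertices of \<open>\<K>\<^sub>2\<^sub>s\<^sub>,\<^sub>n\<close>.\<close>
definition strip_pair :: "int \<Rightarrow> int \<Rightarrow> pt list \<Rightarrow> pt list \<Rightarrow> bool" where
  "strip_pair s n A B \<longleftrightarrow>
     A \<noteq> [] \<and> B \<noteq> [] \<and> hd A = (0, 0) \<and> successively knight_move A \<and> successively knight_move B \<and>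
     knight_move (last A) (s, 0) \<and> knight_move (-2, n - 2) (hd B) \<and> last B = (s - 2, n - 2) \<and>
     (\<forall>c \<in> set A. 0 \<le> fst c \<and> fst c < s) \<and> (\<forall>c \<in> set B. 0 \<le> fst c \<and> fst c < s) \<and>
     length A + length B = nat (2 * s * n) \<and>
     distinct (map (kb_canon (2 * s) n) (A @ map (hshift s) B))"

lemma strip_pair_pos:
  assumes "strip_pair s n A B"
  shows "0 < s"
proof -
  have "A \<noteq> []" and cols: "\<forall>c \<in> set A. 0 \<le> fst c \<and> fst c < s"
    using assms by (auto simp: strip_pair_def)
  then show ?thesis using bspec[OF cols hd_in_set] by fastforce
qed

lemma distinct_insert_middle:
  "distinct (xs @ zs) \<Longrightarrow> distinct ys \<Longrightarrow> set ys \<inter> set (xs @ zs) = {} \<Longrightarrow> distinct (xs @ ys @ zs)"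
  by auto

lemma map_kb_canon_insert_strips:
  assumes m: "0 < m" and n: "0 < n" and cols: "\<forall>c \<in> set ps. 0 \<le> fst c \<and> fst c < m"
    and strips: "strip_pair s n A B"
  shows "map (kb_canon (m + 2 * s) n) (A @ map (hshift s) ps @ map (hshift (m + s)) B) =
    map (insert_columns m s) (map (kb_canon (2 * s) n) A) @ map (hshift s) (map (kb_canon m n) ps) @
    map (insert_columns m s) (map (kb_canon (2 * s) n) (map (hshift s) B))"
proof -
  let ?W = "insert_columns m s" and ?C = "kb_canon (m + 2 * s) n" and ?C2 = "kb_canon (2 * s) n"
  have colsA: "\<forall>c \<in> set A. 0 \<le> fst c \<and> fst c < s" and colsB: "\<forall>c \<in> set B. 0 \<le> fst c \<and> fst c < s"
    using strips by (simp_all add: strip_pair_def)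
  have s: "0 < s" using strips by (rule strip_pair_pos)
  have "?C c = ?W (?C2 c)" if "c \<in> set A" for c
  proof -
    have c: "0 \<le> fst c" "fst c < s" using colsA that by auto
    then have "?W c = c" by (simp add: insert_columns_def)
    then show ?thesis using kb_canon_insert_columns[of m c s n] c m by simp
  qed
  moreover have "?C (hshift (m + s) c) = ?W (?C2 (hshift s c))" if "c \<in> set B" for c
  proof -
    have c: "0 \<le> fst c" "fst c < s" using colsB that by auto
    then have "?W (hshift s c) = hshift (m + s) c" by (simp add: insert_columns_def hshift_def)
    then show ?thesis using kb_canon_insert_columns[of m "hshift s c" s n] c m by simp
  qed
  moreover have "?C (hshift s c) = hshift s (kb_canon m n c)" if "c \<in> set ps" for c
    using kb_canon_hshift[of s c m n] cols that s by simp
  ultimately show ?thesis by simp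
qed

lemma distinct_kb_canon_insert_strips:
  assumes m: "0 < m" and n: "0 < n" and dist: "distinct (map (kb_canon m n) ps)"
    and cols: "\<forall>c \<in> set ps. 0 \<le> fst c \<and> fst c < m" and strips: "strip_pair s n A B"
  shows "distinct (map (kb_canon (m + 2 * s) n) (A @ map (hshift s) ps @ map (hshift (m + s)) B))"
proof -
  let ?W = "insert_columns m s" and ?C2 = "kb_canon (2 * s) n"
  let ?ends = "map ?C2 (A @ map (hshift s) B)"
  have distAB: "distinct ?ends" using strips by (simp add: strip_pair_def)
  have s: "0 < s" using strips by (rule strip_pair_pos)
  have "?C2 c \<in> board (2 * s) n" for c using kb_canon_in_board s n by simp
  then have ends_board: "set ?ends \<subseteq> board (2 * s) n" by (simp only: set_map) blast
  have ends: "distinct (map ?W ?ends)"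
  proof -
    have "inj_on ?W (set ?ends)"
      using inj_on_subset[OF inj_on_insert_columns ends_board] m by simp
    then show ?thesis using distAB distinct_map by blast
  qed
  have middle: "distinct (map (hshift s) (map (kb_canon m n) ps))"
    using dist by (simp only: distinct_map_hshift)
  have disjoint: "set (map (hshift s) (map (kb_canon m n) ps)) \<inter> set (map ?W ?ends) = {}"
  proof -
    have False if "c \<in> set ps" "d \<in> set ?ends" and eq: "hshift s (kb_canon m n c) = ?W d" for c d
    proof -
      have "d \<in> board (2 * s) n" using ends_board that(2) by blast
      then have "fst (?W d) < s \<or> m + s \<le> fst (?W d)"
        using insert_columns_avoids_middle m by simp
      moreover have "0 \<le> fst (kb_canon m n c)" "fst (kb_canon m n c) < m"
        using kb_canon_in_board[OF m n, of c] by (simp_all add: board_def mem_Times_iff)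
      moreover have "fst (?W d) = fst (kb_canon m n c) + s"
        using arg_cong[OF eq, of fst] by simp
      ultimately show False by linarith
    qed
    then show ?thesis by (simp only: set_map) blast
  qed
  have "distinct (map ?W (map ?C2 A) @ map (hshift s) (map (kb_canon m n) ps) @
      map ?W (map ?C2 (map (hshift s) B)))"
    by (rule distinct_insert_middle) (simp_all only: map_append[symmetric] ends middle disjoint)
  then show ?thesis by (simp only: map_kb_canon_insert_strips[OF m n cols strips])
qed

lemma column_path_insert_strips:
  assumes m: "0 < m" and n: "0 < n" and path: "column_path m n ps" and strips: "strip_pair s n A B"
  shows "column_path (m + 2 * s) n (A @ map (hshift s) ps @ map (hshift (m + s)) B)"
proof -
  let ?qs = "A @ map (hshift s) ps @ map (hshift (m + s)) B"
  have len: "length ps = nat (m * n)" and hd: "hd ps = (0, 0)"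
    and moves: "successively knight_move ps" and dist: "distinct (map (kb_canon m n) ps)"
    and cols: "\<forall>c \<in> set ps. 0 \<le> fst c \<and> fst c < m" and last: "last ps = (m - 2, n - 2)"
    using path by (auto simp: column_path_def kb_path_def)
  have A: "A \<noteq> []" "hd A = (0, 0)" "successively knight_move A" "knight_move (last A) (s, 0)"
    and B: "B \<noteq> []" "successively knight_move B" "knight_move (-2, n - 2) (hd B)"
      "last B = (s - 2, n - 2)"
    and colsA: "\<forall>c \<in> set A. 0 \<le> fst c \<and> fst c < s" and colsB: "\<forall>c \<in> set B. 0 \<le> fst c \<and> fst c < s"
    and lenAB: "length A + length B = nat (2 * s * n)"
    using strips by (auto simp: strip_pair_def)
  have s: "0 < s" using strips by (rule strip_pair_pos)
  have ne: "ps \<noteq> []" using kb_path_nonempty[OF m n] path by (auto simp: column_path_def)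
  have "length ?qs = nat ((m + 2 * s) * n)"
    using len lenAB m n s by (simp add: distrib_right nat_add_distrib)
  moreover have "successively knight_move ?qs"
  proof -
    have "hshift s (hd ps) = (s, 0)" using hd by (simp add: hshift_def)
    moreover have "hshift s (last ps) = hshift (m + s) (-2, n - 2)"
      using last by (simp add: hshift_def)
    ultimately show ?thesis using moves A B ne
      by (simp add: successively_append_iff hd_map last_map)
  qed
  moreover have "\<forall>c \<in> set ?qs. 0 \<le> fst c \<and> fst c < m + 2 * s"
    using cols colsA colsB m s by (auto simp: hshift_def)
  moreover have "last ?qs = (m + 2 * s - 2, n - 2)"
    using B by (simp add: last_map hshift_def)
  ultimately show ?thesis
    using distinct_kb_canon_insert_strips[OF m n dist cols strips] A
    by (simp add: column_path_def kb_path_def)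
qed

section \<open>Base cases\<close>

definition three_row_path :: "int \<Rightarrow> pt list" where
  "three_row_path m =
     map (\<lambda>t. if t mod 3 = 0 then (t div 3, 0) else if t mod 3 = 1 then (t div 3 + 1, 2)
              else (t div 3 - 1, 1))
       [0..3 * m - 1]"

lemma row_path_three_row_path:
  assumes m: "0 < m"
  shows "row_path m 3 (three_row_path m)"
proof -
  define f :: "int \<Rightarrow> pt" where "f t = (if t mod 3 = 0 then (t div 3, 0)
    else if t mod 3 = 1 then (t div 3 + 1, 2) else (t div 3 - 1, 1))" for t
  have path: "three_row_path m = map f [0..3 * m - 1]"
    by (simp add: three_row_path_def f_def[abs_def])
  have rows: "0 \<le> snd (f t) \<and> snd (f t) < 3" for t
    by (simp add: f_def)
  have "successively knight_move (map f [0..3 * m - 1])"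
  proof (rule successively_map_upto)
    fix t :: int
    have "t mod 3 = 0 \<and> (t + 1) mod 3 = 1 \<and> (t + 1) div 3 = t div 3 \<or>
        t mod 3 = 1 \<and> (t + 1) mod 3 = 2 \<and> (t + 1) div 3 = t div 3 \<or>
        t mod 3 = 2 \<and> (t + 1) mod 3 = 0 \<and> (t + 1) div 3 = t div 3 + 1"
      by presburger
    then show "knight_move (f t) (f (t + 1))"
      by (elim disjE) (simp_all add: f_def knight_move_def)
  qed
  moreover have "inj_on (kb_canon m 3 \<circ> f) {0..3 * m - 1}"
  proof (rule inj_onI)
    fix s t assume s: "s \<in> {0..3 * m - 1}" and t: "t \<in> {0..3 * m - 1}"
      and eq: "(kb_canon m 3 \<circ> f) s = (kb_canon m 3 \<circ> f) t"
    then have "fst (f s) mod m = fst (f t) mod m" "snd (f s) = snd (f t)"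
      using rows by (simp_all add: kb_canon_rows)
    then have res: "s mod 3 = t mod 3" and "m dvd s div 3 - t div 3"
      by (auto simp: f_def mod_eq_dvd_iff[where c = m] split: if_splits)
    moreover have "0 \<le> s div 3" "s div 3 < m" "0 \<le> t div 3" "t div 3 < m"
      using s t by auto
    ultimately have "s div 3 = t div 3" by (intro eq_if_dvd_diff_bounded) simp_all
    then show "s = t" using res by (metis div_mult_mod_eq)
  qed
  moreover have "(3 * m - 1) mod 3 = 2" "(3 * m - 1) div 3 = m - 1" by presburger+
  then have "knight_move (last (map f [0..3 * m - 1])) (m - 1, 3)"
    using m by (simp add: last_map_upto f_def knight_move_def)
  moreover have "length (map f [0..3 * m - 1]) = nat (m * 3)"
    by (simp add: mult.commute)
  moreover have "hd (map f [0..3 * m - 1]) = (0, 0)"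
    using m by (simp add: hd_map_upto f_def)
  moreover have "\<forall>c \<in> set (map f [0..3 * m - 1]). 0 \<le> snd c \<and> snd c < 3"
    using rows by auto
  ultimately show ?thesis
    unfolding row_path_def kb_path_def path by (simp add: distinct_map)
qed

definition one_row_path :: "int \<Rightarrow> pt list" where
  "one_row_path m = map (\<lambda>t. (t, 2 * (t mod 2))) [0..m - 2] @ [(m, 2 * ((m - 2) mod 2) + 1)]"

lemma mobius_path_one_row_path:
  assumes m: "2 \<le> m"
  shows "mobius_path m 1 (one_row_path m)"
proof -
  define y where "y = 2 * ((m - 2) mod 2)"
  have path: "one_row_path m = map (\<lambda>t. (t, 2 * (t mod 2))) [0..m - 2] @ [(m, y + 1)]"
    by (simp add: one_row_path_def y_def)
  have "successively knight_move (map (\<lambda>t. (t, 2 * (t mod 2))) [0..m - 2])"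
    by (rule successively_map_upto) (simp add: knight_move_def; presburger)
  moreover have "knight_move (m - 2, y) (m, y + 1)" by (simp add: knight_move_def)
  ultimately have moves: "successively knight_move (one_row_path m)"
    using m by (simp add: path successively_append_iff last_map_upto y_def)
  have "map (kb_canon m 1) (one_row_path m) = map (\<lambda>t. (t, 0)) [0..m - 2] @ [(m - 1, 0)]"
  proof -
    have "odd (y + 1)" by (simp add: y_def)
    moreover have "(- 1) mod m = m - 1" using m by (simp add: zmod_zminus1_eq_if)
    ultimately show ?thesis using m by (simp add: path kb_canon_def)
  qed
  then have "distinct (map (kb_canon m 1) (one_row_path m))"
    by (auto simp: distinct_map inj_on_def)
  moreover have "knight_move (last (one_row_path m)) (m - 1, y - 1)"
    by (simp add: path knight_move_def)
  moreover have "(m - 1, y - 1) \<in> {(m - 1, 1), (m - 1, - 1)}"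
    by (auto simp: y_def)
  moreover have "hd (one_row_path m) = (0, 0)"
    using m by (simp add: path hd_map_upto)
  moreover have "length (one_row_path m) = nat (m * 1)"
    using m by (simp add: path)
  ultimately show ?thesis
    using moves by (auto simp: mobius_path_def kb_path_def)
qed

lemma board_path_7_5:
  "board_path 7 5 [(0, 0), (1, 2), (0, 4), (2, 3), (4, 4), (6, 3), (5, 1), (3, 0), (1, 1), (0, 3),
    (2, 4), (4, 3), (6, 4), (5, 2), (6, 0), (4, 1), (2, 0), (0, 1), (1, 3), (3, 2), (4, 0),
    (6, 1), (4, 2), (2, 1), (0, 2), (1, 4), (3, 3), (5, 4), (6, 2), (5, 0), (3, 1), (1, 0),
    (2, 2), (3, 4), (5, 3)]"
  by code_simp

lemma board_path_8_5:
  "board_path 8 5 [(0, 0), (2, 1), (1, 3), (0, 1), (2, 0), (1, 2), (0, 4), (2, 3), (0, 2), (1, 4),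
    (3, 3), (5, 4), (7, 3), (6, 1), (4, 0), (3, 2), (2, 4), (0, 3), (1, 1), (3, 0), (4, 2),
    (3, 4), (5, 3), (7, 4), (6, 2), (7, 0), (5, 1), (4, 3), (6, 4), (7, 2), (6, 0), (4, 1),
    (2, 2), (1, 0), (3, 1), (5, 0), (7, 1), (5, 2), (4, 4), (6, 3)]"
  by code_simp

lemma board_path_9_5:
  "board_path 9 5 [(0, 0), (1, 2), (0, 4), (2, 3), (4, 4), (6, 3), (8, 4), (7, 2), (8, 0), (6, 1),
    (8, 2), (7, 4), (5, 3), (3, 4), (1, 3), (0, 1), (2, 0), (3, 2), (4, 0), (2, 1), (0, 2),
    (1, 0), (3, 1), (5, 0), (7, 1), (8, 3), (6, 4), (5, 2), (6, 0), (4, 1), (2, 2), (1, 4),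
    (3, 3), (5, 4), (4, 2), (3, 0), (1, 1), (0, 3), (2, 4), (4, 3), (5, 1), (7, 0), (6, 2),
    (8, 1), (7, 3)]"
  by code_simp

lemma board_path_10_5:
  "board_path 10 5 [(0, 0), (1, 2), (0, 4), (2, 3), (4, 4), (6, 3), (8, 4), (9, 2), (8, 0),
    (6, 1), (4, 0), (2, 1), (0, 2), (1, 4), (3, 3), (5, 4), (7, 3), (9, 4), (8, 2), (9, 0),
    (7, 1), (5, 0), (4, 2), (3, 4), (1, 3), (0, 1), (2, 0), (4, 1), (6, 0), (8, 1), (9, 3),
    (7, 4), (5, 3), (7, 2), (9, 1), (7, 0), (6, 2), (4, 3), (5, 1), (3, 2), (2, 4), (0, 3),
    (1, 1), (3, 0), (2, 2), (1, 0), (3, 1), (5, 2), (6, 4), (8, 3)]"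
  by code_simp

lemma board_path_11_5:
  "board_path 11 5 [(0, 0), (1, 2), (0, 4), (2, 3), (4, 4), (6, 3), (8, 4), (10, 3), (9, 1),
    (7, 0), (5, 1), (3, 0), (1, 1), (0, 3), (2, 4), (3, 2), (2, 0), (0, 1), (1, 3), (3, 4),
    (4, 2), (2, 1), (4, 0), (6, 1), (5, 3), (7, 4), (8, 2), (9, 0), (10, 2), (9, 4), (7, 3),
    (5, 4), (3, 3), (1, 4), (0, 2), (1, 0), (2, 2), (4, 1), (6, 0), (8, 1), (10, 0), (9, 2),
    (10, 4), (8, 3), (6, 2), (5, 0), (7, 1), (5, 2), (3, 1), (4, 3), (6, 4), (7, 2), (8, 0),
    (10, 1), (9, 3)]"
  by code_simp

lemma board_path_12_5:
  "board_path 12 5 [(0, 0), (2, 1), (1, 3), (0, 1), (2, 0), (1, 2), (0, 4), (2, 3), (0, 2),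
    (1, 4), (3, 3), (5, 4), (7, 3), (9, 4), (11, 3), (10, 1), (8, 0), (6, 1), (4, 0), (3, 2),
    (4, 4), (5, 2), (3, 1), (1, 0), (2, 2), (3, 4), (4, 2), (5, 0), (7, 1), (9, 0), (11, 1),
    (9, 2), (10, 0), (11, 2), (10, 4), (8, 3), (6, 4), (4, 3), (2, 4), (0, 3), (1, 1), (3, 0),
    (5, 1), (6, 3), (8, 4), (7, 2), (6, 0), (4, 1), (5, 3), (7, 4), (8, 2), (7, 0), (6, 2),
    (8, 1), (9, 3), (11, 4), (10, 2), (11, 0), (9, 1), (10, 3)]"
  by code_simp

lemma board_path_7_6:
  "board_path 7 6 [(0, 0), (1, 2), (0, 4), (2, 5), (1, 3), (0, 5), (2, 4), (0, 3), (1, 5), (3, 4),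
    (5, 5), (6, 3), (5, 1), (3, 0), (1, 1), (3, 2), (2, 0), (0, 1), (2, 2), (1, 0), (0, 2),
    (1, 4), (3, 5), (2, 3), (4, 4), (6, 5), (5, 3), (6, 1), (4, 0), (2, 1), (4, 2), (5, 0),
    (3, 1), (4, 3), (6, 4), (4, 5), (3, 3), (5, 2), (6, 0), (4, 1), (6, 2), (5, 4)]"
  by code_simp

lemma board_path_9_6:
  "board_path 9 6 [(0, 0), (2, 1), (0, 2), (1, 0), (3, 1), (5, 0), (7, 1), (8, 3), (7, 5), (5, 4),
    (3, 5), (1, 4), (3, 3), (4, 5), (6, 4), (8, 5), (7, 3), (8, 1), (6, 0), (5, 2), (4, 0),
    (6, 1), (8, 0), (7, 2), (8, 4), (6, 5), (4, 4), (2, 5), (0, 4), (1, 2), (2, 0), (0, 1),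
    (1, 3), (0, 5), (2, 4), (3, 2), (1, 1), (0, 3), (1, 5), (2, 3), (4, 2), (3, 0), (2, 2),
    (4, 1), (5, 3), (3, 4), (5, 5), (6, 3), (8, 2), (7, 0), (5, 1), (4, 3), (6, 2), (7, 4)]"
  by code_simp

lemma board_path_11_6:
  "board_path 11 6 [(0, 0), (2, 1), (4, 0), (6, 1), (8, 0), (10, 1), (9, 3), (10, 5), (8, 4),
    (10, 3), (9, 5), (7, 4), (5, 5), (3, 4), (1, 5), (0, 3), (1, 1), (3, 0), (4, 2), (5, 0),
    (3, 1), (1, 0), (0, 2), (1, 4), (3, 5), (2, 3), (0, 4), (1, 2), (2, 0), (0, 1), (2, 2),
    (4, 1), (6, 0), (7, 2), (9, 1), (7, 0), (5, 1), (4, 3), (6, 2), (8, 1), (10, 0), (9, 2),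
    (10, 4), (8, 5), (6, 4), (8, 3), (10, 2), (9, 0), (7, 1), (5, 2), (7, 3), (6, 5), (5, 3),
    (4, 5), (2, 4), (0, 5), (1, 3), (3, 2), (4, 4), (2, 5), (3, 3), (5, 4), (7, 5), (6, 3),
    (8, 2), (9, 4)]"
  by code_simp

lemma board_path_7_8:
  "board_path 7 8 [(0, 0), (2, 1), (4, 0), (6, 1), (5, 3), (6, 5), (5, 7), (3, 6), (1, 7), (0, 5),
    (1, 3), (0, 1), (2, 0), (3, 2), (1, 1), (3, 0), (5, 1), (6, 3), (5, 5), (6, 7), (4, 6),
    (2, 7), (0, 6), (2, 5), (3, 7), (1, 6), (0, 4), (1, 2), (2, 4), (0, 3), (1, 5), (0, 7),
    (2, 6), (4, 7), (6, 6), (4, 5), (6, 4), (4, 3), (6, 2), (5, 0), (3, 1), (1, 0), (0, 2),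
    (1, 4), (2, 2), (3, 4), (4, 2), (5, 4), (3, 3), (4, 1), (6, 0), (5, 2), (4, 4), (2, 3),
    (3, 5), (5, 6)]"
  by code_simp

lemma board_path_9_8:
  "board_path 9 8 [(0, 0), (2, 1), (0, 2), (1, 0), (3, 1), (5, 0), (7, 1), (8, 3), (7, 5), (8, 7),
    (6, 6), (8, 5), (7, 7), (5, 6), (3, 7), (1, 6), (0, 4), (1, 2), (2, 0), (0, 1), (1, 3),
    (0, 5), (1, 7), (2, 5), (0, 6), (2, 7), (4, 6), (6, 7), (8, 6), (7, 4), (8, 2), (7, 0),
    (6, 2), (8, 1), (6, 0), (4, 1), (3, 3), (1, 4), (2, 2), (0, 3), (1, 1), (3, 0), (5, 1),
    (4, 3), (3, 5), (5, 4), (7, 3), (5, 2), (4, 0), (3, 2), (2, 4), (3, 6), (1, 5), (0, 7),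
    (2, 6), (4, 7), (5, 5), (3, 4), (4, 2), (2, 3), (4, 4), (6, 3), (8, 4), (6, 5), (5, 7),
    (4, 5), (5, 3), (6, 1), (8, 0), (7, 2), (6, 4), (7, 6)]"
  by code_simp

lemma board_path_11_8:
  "board_path 11 8 [(0, 0), (2, 1), (0, 2), (1, 0), (3, 1), (5, 0), (7, 1), (9, 0), (10, 2),
    (9, 4), (10, 6), (8, 7), (6, 6), (4, 7), (2, 6), (0, 7), (1, 5), (0, 3), (1, 1), (3, 0),
    (4, 2), (2, 3), (0, 4), (1, 6), (3, 7), (4, 5), (5, 7), (3, 6), (1, 7), (0, 5), (2, 4),
    (1, 2), (2, 0), (0, 1), (1, 3), (3, 2), (4, 0), (6, 1), (8, 0), (10, 1), (8, 2), (7, 0),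
    (5, 1), (6, 3), (4, 4), (2, 5), (0, 6), (2, 7), (4, 6), (6, 7), (7, 5), (5, 6), (3, 5),
    (1, 4), (2, 2), (3, 4), (5, 5), (4, 3), (6, 4), (5, 2), (3, 3), (5, 4), (6, 2), (4, 1),
    (6, 0), (8, 1), (10, 0), (9, 2), (7, 3), (8, 5), (7, 7), (6, 5), (5, 3), (7, 2), (9, 1),
    (10, 3), (8, 4), (7, 6), (9, 7), (10, 5), (9, 3), (7, 4), (8, 6), (10, 7), (9, 5), (8, 3),
    (10, 4), (9, 6)]"
  by code_simp

lemma row_path_1_4: "row_path 1 4 [(0, 0), (- 1, 2), (- 3, 1), (- 2, 3)]"
  by code_simp

lemma row_path_3_4:
  "row_path 3 4 [(0, 0), (- 1, 2), (1, 3), (2, 1), (4, 0), (6, 1), (4, 2), (2, 3), (0, 2),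
    (- 1, 0), (1, 1), (0, 3)]"
  by code_simp

lemma row_path_5_4:
  "row_path 5 4 [(0, 0), (- 1, 2), (1, 3), (2, 1), (3, 3), (5, 2), (7, 3), (8, 1), (6, 0), (4, 1),
    (5, 3), (7, 2), (9, 3), (11, 2), (12, 0), (10, 1), (8, 0), (6, 1), (4, 0), (3, 2)]"
  by code_simp

lemma row_path_1_5: "row_path 1 5 [(0, 0), (2, 1), (0, 2), (1, 4), (- 1, 3)]"
  by code_simp

lemma row_path_2_5:
  "row_path 2 5 [(0, 0), (2, 1), (3, 3), (5, 4), (6, 2), (5, 0), (3, 1), (1, 2), (2, 4), (0, 3)]"
  by code_simp

lemma row_path_3_5:
  "row_path 3 5 [(0, 0), (2, 1), (4, 0), (6, 1), (8, 0), (7, 2), (6, 4), (8, 3), (7, 1), (5, 2),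
    (3, 3), (1, 4), (0, 2), (- 1, 4), (1, 3)]"
  by code_simp

lemma row_path_4_5:
  "row_path 4 5 [(0, 0), (2, 1), (3, 3), (5, 4), (4, 2), (5, 0), (3, 1), (1, 2), (2, 4), (4, 3),
    (5, 1), (3, 0), (2, 2), (3, 4), (1, 3), (0, 1), (- 2, 0), (- 1, 2), (0, 4), (2, 3)]"
  by code_simp

lemma row_path_5_5:
  "row_path 5 5 [(0, 0), (2, 1), (4, 0), (6, 1), (8, 0), (9, 2), (8, 4), (6, 3), (4, 4), (2, 3),
    (0, 4), (- 2, 3), (0, 2), (1, 4), (2, 2), (1, 0), (3, 1), (4, 3), (5, 1), (3, 2), (2, 0),
    (1, 2), (- 1, 1), (0, 3), (2, 4)]"
  by code_simp

lemma row_path_6_5: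
  "row_path 6 5 [(0, 0), (2, 1), (4, 0), (6, 1), (8, 0), (10, 1), (9, 3), (11, 4), (13, 3),
    (15, 4), (17, 3), (19, 4), (20, 2), (19, 0), (18, 2), (17, 0), (16, 2), (15, 0), (17, 1),
    (15, 2), (14, 4), (12, 3), (13, 1), (11, 2), (10, 4), (8, 3), (9, 1), (7, 2), (6, 4), (4, 3)]"
  by code_simp

lemma row_path_1_6: "row_path 1 6 [(0, 0), (2, 1), (4, 2), (2, 3), (1, 5), (- 1, 4)]"
  by code_simp

lemma row_path_3_6:
  "row_path 3 6 [(0, 0), (2, 1), (4, 0), (6, 1), (8, 0), (7, 2), (6, 4), (8, 5), (7, 3), (5, 2),
    (7, 1), (6, 3), (7, 5), (5, 4), (3, 5), (2, 3), (0, 2), (1, 4)]"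
  by code_simp

lemma row_path_5_6:
  "row_path 5 6 [(0, 0), (- 2, 1), (- 4, 0), (- 6, 1), (- 8, 0), (- 9, 2), (- 10, 4), (- 8, 5),
    (- 7, 3), (- 6, 5), (- 8, 4), (- 10, 5), (- 11, 3), (- 12, 5), (- 14, 4), (- 15, 2),
    (- 13, 1), (- 11, 0), (- 12, 2), (- 10, 1), (- 8, 2), (- 7, 0), (- 6, 2), (- 4, 1), (- 5, 3),
    (- 4, 5), (- 3, 3), (- 1, 4), (1, 3), (3, 4)]"
  by code_simp

lemma column_path_5_2:
  "column_path 5 2 [(0, 0), (2, 1), (4, 0), (3, - 2), (1, - 1), (0, 1), (2, 2), (0, 3), (1, 1),
    (3, 0)]"
  by code_simp

lemma column_path_7_2:
  "column_path 7 2 [(0, 0), (2, - 1), (3, - 3), (1, - 4), (0, - 2), (2, - 3), (4, - 4), (6, - 5),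
    (5, - 7), (3, - 6), (5, - 5), (6, - 3), (4, - 2), (5, 0)]"
  by code_simp

lemma column_path_9_2:
  "column_path 9 2 [(0, 0), (2, 1), (3, - 1), (4, - 3), (6, - 4), (8, - 5), (7, - 7), (5, - 6),
    (4, - 4), (3, - 2), (5, - 1), (7, - 2), (8, 0), (6, 1), (7, - 1), (8, - 3), (6, - 2), (7, 0)]"
  by code_simp

lemma column_path_7_4:
  "column_path 7 4 [(0, 0), (2, - 1), (1, 1), (0, - 1), (1, - 3), (2, - 5), (4, - 4), (3, - 2),
    (4, 0), (6, - 1), (4, - 2), (3, - 4), (1, - 5), (0, - 7), (1, - 9), (0, - 11), (2, - 10),
    (4, - 11), (3, - 9), (2, - 11), (0, - 10), (1, - 8), (0, - 6), (1, - 4), (3, - 3), (5, - 2),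
    (6, 0), (5, 2)]"
  by code_simp

lemma column_path_9_4:
  "column_path 9 4 [(0, 0), (2, 1), (3, - 1), (2, - 3), (1, - 5), (3, - 4), (4, - 6), (3, - 8),
    (5, - 9), (4, - 11), (6, - 10), (7, - 8), (5, - 7), (4, - 9), (2, - 10), (0, - 11), (1, - 9),
    (0, - 7), (2, - 8), (3, - 6), (4, - 4), (3, - 2), (5, - 3), (6, - 1), (8, - 2), (7, - 4),
    (8, - 6), (6, - 5), (7, - 7), (8, - 5), (7, - 3), (8, - 1), (6, 0), (7, - 2), (8, 0), (7, 2)]"
  by code_simp

lemma column_path_11_4:
  "column_path 11 4 [(0, 0), (2, 1), (4, 2), (5, 4), (7, 3), (6, 1), (4, 0), (5, 2), (3, 3),
    (2, 5), (4, 4), (6, 5), (5, 3), (7, 2), (9, 3), (7, 4), (6, 2), (7, 0), (8, 2), (10, 1),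
    (9, - 1), (7, - 2), (5, - 3), (6, - 5), (8, - 4), (10, - 3), (8, - 2), (9, - 4), (7, - 3),
    (6, - 1), (7, 1), (8, - 1), (10, - 2), (9, 0), (10, 2), (8, 3), (9, 5), (10, 3), (9, 1),
    (10, - 1), (8, 0), (9, - 2), (10, 0), (9, 2)]"
  by code_simp

lemma mobius_path_1_2: "mobius_path 1 2 [(0, 0), (2, 1)]"
  by code_simp

lemma mobius_path_3_2: "mobius_path 3 2 [(0, 0), (- 2, 1), (- 3, - 1), (- 1, 0), (- 2, 2), (0, 1)]"
  by code_simp

lemma board_block_5:
  "board_block 5 [(0, 4), (1, 2), (0, 0), (2, 1), (4, 0), (5, 2), (4, 4), (2, 3), (0, 2), (1, 0),
    (3, 1), (5, 0), (4, 2), (5, 4), (3, 3), (1, 4), (2, 2), (0, 1), (1, 3), (3, 4), (5, 3),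
    (4, 1), (2, 0), (3, 2), (2, 4), (0, 3), (1, 1), (3, 0), (5, 1), (4, 3)]"
  by code_simp

lemma board_block_6:
  "board_block 6 [(0, 5), (1, 3), (0, 1), (2, 0), (4, 1), (5, 3), (4, 5), (2, 4), (0, 3), (1, 5),
    (3, 4), (5, 5), (4, 3), (5, 1), (3, 2), (1, 1), (3, 0), (2, 2), (1, 0), (0, 2), (1, 4),
    (3, 5), (5, 4), (4, 2), (5, 0), (3, 1), (2, 3), (0, 4), (1, 2), (0, 0), (2, 1), (4, 0),
    (5, 2), (3, 3), (2, 5), (4, 4)]"
  by code_simp

lemma board_block_8:
  "board_block 8 [(0, 7), (1, 5), (0, 3), (1, 1), (3, 0), (5, 1), (4, 3), (5, 5), (4, 7), (2, 6),
    (0, 5), (1, 7), (3, 6), (5, 7), (4, 5), (3, 7), (5, 6), (4, 4), (5, 2), (4, 0), (3, 2),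
    (2, 4), (1, 6), (0, 4), (2, 3), (3, 1), (5, 0), (4, 2), (5, 4), (3, 5), (2, 7), (0, 6),
    (1, 4), (0, 2), (1, 0), (2, 2), (0, 1), (2, 0), (4, 1), (5, 3), (3, 4), (1, 3), (2, 1),
    (0, 0), (1, 2), (3, 3), (2, 5), (4, 6)]"
  by code_simp

lemma strip_pair_3_2:
  "strip_pair 3 2
    [(0, 0), (2, - 1), (0, - 2), (1, - 4), (2, - 2), (0, - 1), (1, 1)]
    [(0, - 1), (1, 1), (2, 3), (0, 2), (1, 0)]"
  by code_simp

lemma strip_pair_3_4:
  "strip_pair 3 4
    [(0, 0), (2, - 1), (1, - 3), (0, - 1), (1, 1)]
    [(0, 1), (2, 2), (1, 0), (0, 2), (1, 4), (0, 6), (2, 7), (0, 8), (2, 9), (1, 7), (2, 5),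
     (1, 3), (0, 5), (2, 6), (0, 7), (2, 8), (1, 6), (0, 4), (1, 2)]"
  by code_simp

section \<open>Existence of Moebius tours\<close>

lemma int_induct_period:
  fixes m m0 d :: int
  assumes "m0 \<le> m" and "0 < d"
    and base: "\<And>m. m0 \<le> m \<Longrightarrow> m < m0 + d \<Longrightarrow> P m"
    and step: "\<And>m. m0 \<le> m \<Longrightarrow> P m \<Longrightarrow> P (m + d)"
  shows "P m"
  using assms(1)
proof (induction "nat (m - m0)" arbitrary: m rule: less_induct)
  case less
  show ?case
  proof (cases "m < m0 + d")
    case True
    then show ?thesis using base less.prems by blast
  next
    case False
    then have "P (m - d)" using less assms(2) by simp
    then show ?thesis using step[of "m - d"] False by simp
  qed
qed

lemma board_block_exists: "n \<in> {5, 6, 8} \<Longrightarrow> \<exists>B. board_block n B"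
  using board_block_5 board_block_6 board_block_8 by blast

lemma strip_pair_exists: "n \<in> {2, 4} \<Longrightarrow> \<exists>A B. strip_pair 3 n A B"
  using strip_pair_3_2 strip_pair_3_4 by blast

lemma board_path_base:
  assumes "7 \<le> m" "m < 13" "n \<in> {5, 6, 8}" "odd m \<or> n = 5"
  shows "\<exists>ps. board_path m n ps"
proof -
  have "m = 7 \<or> m = 8 \<or> m = 9 \<or> m = 10 \<or> m = 11 \<or> m = 12" using assms(1,2) by linarith
  then show ?thesis using assms(3,4)
    by (elim disjE; simp; blast intro: board_path_7_5 board_path_8_5 board_path_9_5 board_path_10_5
      board_path_11_5 board_path_12_5 board_path_7_6 board_path_9_6 board_path_11_6
      board_path_7_8 board_path_9_8 board_path_11_8)
qed

lemma board_path_exists: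
  assumes "7 \<le> m" "n \<in> {5, 6, 8}" "odd m \<or> n = 5"
  shows "\<exists>ps. board_path m n ps"
proof -
  have "odd m \<or> n = 5 \<longrightarrow> (\<exists>ps. board_path m n ps)"
  proof (rule int_induct_period[of 7 m 6])
    fix m :: int
    assume "7 \<le> m" "m < 7 + 6"
    then show "odd m \<or> n = 5 \<longrightarrow> (\<exists>ps. board_path m n ps)"
      using board_path_base assms(2) by simp
  next
    fix m :: int
    assume m: "7 \<le> m" and IH: "odd m \<or> n = 5 \<longrightarrow> (\<exists>ps. board_path m n ps)"
    show "odd (m + 6) \<or> n = 5 \<longrightarrow> (\<exists>ps. board_path (m + 6) n ps)"
    proof
      assume "odd (m + 6) \<or> n = 5"
      then obtain ps where "board_path m n ps" using IH by auto
      moreover obtain B where "board_block n B" using board_block_exists assms(2) by blast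
      moreover have "0 < m" "0 < n" using m assms(2) by auto
      ultimately show "\<exists>ps. board_path (m + 6) n ps"
        using board_path_append_block by blast
    qed
  qed (use assms(1) in simp_all)
  then show ?thesis using assms(3) by blast
qed

lemma column_path_base:
  assumes "n \<in> {2, 4}" "n + 3 \<le> m" "m < n + 9" "odd m"
  shows "\<exists>ps. column_path m n ps"
proof -
  have "n = 2 \<and> (m = 5 \<or> m = 7 \<or> m = 9) \<or> n = 4 \<and> (m = 7 \<or> m = 9 \<or> m = 11)"
    using assms by auto presburger+
  then show ?thesis
    by (elim disjE conjE; simp; blast intro: column_path_5_2 column_path_7_2 column_path_9_2
      column_path_7_4 column_path_9_4 column_path_11_4)
qed

lemma column_path_exists:
  assumes "n \<in> {2, 4}" "n + 3 \<le> m" "odd m"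
  shows "\<exists>ps. column_path m n ps"
proof -
  have n: "0 < n" using assms(1) by auto
  have "odd m \<longrightarrow> (\<exists>ps. column_path m n ps)"
  proof (rule int_induct_period[of "n + 3" m 6])
    fix m :: int
    assume "n + 3 \<le> m" "m < n + 3 + 6"
    then show "odd m \<longrightarrow> (\<exists>ps. column_path m n ps)"
      using column_path_base assms(1) by simp
  next
    fix m :: int
    assume m: "n + 3 \<le> m" and IH: "odd m \<longrightarrow> (\<exists>ps. column_path m n ps)"
    show "odd (m + 6) \<longrightarrow> (\<exists>ps. column_path (m + 6) n ps)"
    proof
      assume "odd (m + 6)"
      then obtain ps where "column_path m n ps" using IH by auto
      moreover obtain A B where "strip_pair 3 n A B" using strip_pair_exists assms(1) by blast
      moreover have "0 < m" using m n by simp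
      ultimately show "\<exists>ps. column_path (m + 6) n ps"
        using column_path_insert_strips n by fastforce
    qed
  qed (use assms(2) in simp_all)
  then show ?thesis using assms(3) by blast
qed

text \<open>Row paths of height \<open>4\<close> are only available for \<open>m \<le> 5\<close>; for larger odd \<open>m\<close> the
  height \<open>8\<close> is reached by a board path instead.\<close>
lemma row_path_base:
  assumes m: "0 < m" and n: "3 \<le> n" "n < 7" and odd: "odd m \<or> odd n"
    and not_wide_4: "\<not> (7 \<le> m \<and> n = 4)"
  shows "\<exists>ps. row_path m n ps"
proof -
  have "n = 3 \<or> n = 4 \<and> (m = 1 \<or> m = 3 \<or> m = 5) \<or> n = 5 \<and> m \<le> 6 \<or>
      n = 6 \<and> (m = 1 \<or> m = 3 \<or> m = 5) \<or> (n = 5 \<or> n = 6) \<and> 7 \<le> m"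
    using assms by presburger
  then consider "n = 3" | "n = 4" "m = 1 \<or> m = 3 \<or> m = 5" | "n = 5" "m \<le> 6"
    | "n = 6" "m = 1 \<or> m = 3 \<or> m = 5" | "n \<in> {5, 6}" "7 \<le> m"
    by blast
  then show ?thesis
  proof cases
    case 1
    then show ?thesis using row_path_three_row_path m by blast
  next
    case 2
    then show ?thesis using row_path_1_4 row_path_3_4 row_path_5_4 by blast
  next
    case 3
    then have "m = 1 \<or> m = 2 \<or> m = 3 \<or> m = 4 \<or> m = 5 \<or> m = 6" using m by linarith
    then show ?thesis using 3 row_path_1_5 row_path_2_5 row_path_3_5 row_path_4_5 row_path_5_5
      row_path_6_5 by blast
  next
    case 4
    then show ?thesis using row_path_1_6 row_path_3_6 row_path_5_6 by blast
  next
    case 5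
    then have "odd m \<or> n = 5" using odd by auto
    then show ?thesis using board_path_exists[of m n] board_path_imp_row_path 5 by blast
  qed
qed

lemma row_path_exists:
  assumes m: "0 < m" and n: "3 \<le> n" and odd: "odd m \<or> odd n"
    and not_wide_4: "\<not> (7 \<le> m \<and> n = 4)"
  shows "\<exists>ps. row_path m n ps"
proof -
  let ?P = "\<lambda>n. (odd m \<or> odd n) \<and> \<not> (7 \<le> m \<and> n = 4) \<longrightarrow> (\<exists>ps. row_path m n ps)"
  have "?P n"
  proof (rule int_induct_period[of 3 n 4])
    fix n :: int
    assume "3 \<le> n" "n < 3 + 4"
    then show "?P n" using row_path_base m by simp
  next
    fix n :: int
    assume n: "3 \<le> n" and IH: "?P n"
    show "?P (n + 4)"
    proof
      assume prems: "(odd m \<or> odd (n + 4)) \<and> \<not> (7 \<le> m \<and> n + 4 = 4)"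
      show "\<exists>ps. row_path m (n + 4) ps"
      proof (cases "7 \<le> m \<and> n = 4")
        case True
        then have "odd m" using prems by auto
        then show ?thesis using board_path_exists[of m 8] board_path_imp_row_path True by auto
      next
        case False
        then obtain ps where "row_path m n ps" using IH prems by auto
        moreover obtain B where "row_band m n B" using row_band_exists m by blast
        moreover have "0 < n" using n by simp
        ultimately show ?thesis using row_path_append_band m by blast
      qed
    qed
  qed (use n in simp_all)
  then show ?thesis using odd not_wide_4 by blast
qed

lemma mobius_path_exists:
  assumes m: "0 < m" and n: "0 < n" and nontrivial: "1 < m \<or> 1 < n" and odd: "odd m \<or> odd n"
  shows "\<exists>ps. mobius_path m n ps"
proof -
  consider "n = 1" | "n = 2" | "n = 4" | "3 \<le> n" "n \<noteq> 4" using n by linarith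
  then show ?thesis
  proof cases
    case 1
    then have "2 \<le> m" using nontrivial by simp
    then show ?thesis using mobius_path_one_row_path 1 by blast
  next
    case 2
    then have "odd m" using odd by simp
    then have "m = 1 \<or> m = 3 \<or> 5 \<le> m" using m by presburger
    then consider "m = 1" | "m = 3" | "5 \<le> m" by blast
    then show ?thesis
      using mobius_path_1_2 mobius_path_3_2 column_path_exists[of n m] column_path_imp_mobius_path
        \<open>odd m\<close> 2 by cases auto
  next
    case 3
    then have "odd m" using odd by simp
    then have "m \<le> 5 \<or> 7 \<le> m" by presburger
    then consider "m \<le> 5" | "7 \<le> m" by blast
    then show ?thesis
    proof cases
      case 1
      then obtain ps where "row_path m 4 ps" using row_path_exists[OF m, of 4] \<open>odd m\<close> by auto
      then show ?thesis using row_path_imp_mobius_path 3 by blast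
    next
      case 2
      then obtain ps where "column_path m 4 ps" using column_path_exists[of 4 m] \<open>odd m\<close> by auto
      then show ?thesis using column_path_imp_mobius_path 3 by blast
    qed
  next
    case 4
    then show ?thesis using row_path_exists[OF m] row_path_imp_mobius_path odd by blast
  qed
qed

theorem theorem6p3:
  fixes m n :: int
  assumes "0 < m" and "0 < n" and "1 < m \<or> 1 < n"
  shows "(\<exists>p N. mobius_knight_tour m n p N) \<longleftrightarrow> (odd m \<or> odd n)"
proof
  assume "\<exists>p N. mobius_knight_tour m n p N"
  then show "odd m \<or> odd n" using mobius_tour_imp_odd assms(1,2) by blast
next
  assume "odd m \<or> odd n"
  then obtain ps where "mobius_path m n ps" using mobius_path_exists assms by blast
  then show "\<exists>p N. mobius_knight_tour m n p N" using mobius_path_imp_tour assms(1,2) by blast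
qed

end
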